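(* Let $F$ and $B$ be finite simplicial sets, let $G$ be a simplicial group acting simplicially on $F$ from the left, and let $\tau\colon B_q\to G_{q-1}$ ($q>0$) be a twisting function, so that $E(\tau)=F\times_\tau B$ is a twisted Cartesian product. Let $R\to A$ be a map of commutative rings. Equip the simplicial commutative $R$-algebra $\mathcal{L}^R_F(A)$ with the left action of $G$ by $R$-algebra isomorphisms given in degree $n$ by $g\cdot\bigl(\bigotimes_{f\in F_n}a_f\bigr)=\bigotimes_{f\in F_n}a_{g^{-1}f}$ for $g\in G_n$. Then there is an isomorphism of simplicial commutative $R$-algebras \[\mathcal{L}^R_{E(\tau)}(A)\cong \mathcal{L}^R_B\bigl(\mathcal{L}^R_F(A)^\tau\bigr),\] induced in each simplicial degree $n$ by the identification $\bigotimes_{(f,b)\in F_n\times B_n}A\cong\bigotimes_{b\in B_n}\bigotimes_{f\in F_n}A$.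
   Context: All tensor products are over $R$. For a finite simplicial set $X$ and a commutative $R$-algebra $A$, the (unpointed) Loday construction $\mathcal{L}^R_X(A)$ is the simplicial commutative $R$-algebra with $n$-simplices $\bigotimes_{x\in X_n}A$; the face map $d_i$ sends $\bigotimes_x a_x$ to $\bigotimes_{y\in X_{n-1}}\prod_{x: d_ix=y}a_x$ and the degeneracy $s_i$ sends it to $\bigotimes_{z\in X_{n+1}}\prod_{x:s_ix=z}a_x$ (empty products are $1$). A twisting function (Moore/May) for a simplicial group $G$ and simplicial set $B$ is a family of functions $\tau\colon B_q\to G_{q-1}$, $q>0$, with $d_0\tau(b)=[\tau(d_0b)]^{-1}\tau(d_1b)$ for $q>1$; $\tau(d_{i+1}b)=d_i\tau(b)$ for $i\ge1$, $q>1$; $\tau(s_{i+1}b)=s_i\tau(b)$ for $i\ge 0$; and $\tau(s_0b)=e$. If $G$ acts simplicially on $F$ from the left, the twisted Cartesian product $E(\tau)=F\times_\tau B$ is the simplicial set with $E(\tau)_n=F_n\times B_n$, $d_0(f,b)=(\tau(b)\cdot d_0f,d_0b)$, $d_i(f,b)=(d_if,d_ib)$ for $i>0$, $s_i(f,b)=(s_if,s_ib)$. If $C$ is a simplicial commutative $R$-algebra on which $G$ acts simplicially with each $G_q$ acting on $C_q$ by $R$-algebra isomorphisms, the twisted Loday construction $\mathcal{L}^R_B(C^\tau)$ is the simplicial commutative $R$-algebra with $n$-simplices $\bigotimes_{b\in B_n}C_n$ and structure maps on monomials: $d_0(\bigotimes_b f_b)=\bigotimes_{c\in B_{n-1}}\prod_{b:d_0b=c}\tau(b)(d_0f_b)$;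 $d_i(\bigotimes_b f_b)=\bigotimes_{c\in B_{n-1}}\prod_{b:d_ib=c}d_if_b$ for $1\le i\le n$; $s_i(\bigotimes_b f_b)=\bigotimes_{e\in B_{n+1}}\prod_{b:s_ib=e}s_if_b$. *)

theory Defs
  imports "HOL-Algebra.Algebra"
begin

definition simp_set :: "(nat \<Rightarrow> 'x set) \<Rightarrow> (nat \<Rightarrow> nat \<Rightarrow> 'x \<Rightarrow> 'x) \<Rightarrow> (nat \<Rightarrow> nat \<Rightarrow> 'x \<Rightarrow> 'x) \<Rightarrow> bool"
  where "simp_set Xs d s \<longleftrightarrow>
    (\<forall>n i x. 0 < n \<and> i \<le> n \<and> x \<in> Xs n \<longrightarrow> d n i x \<in> Xs (n - 1)) \<and>
    (\<forall>n i x. i \<le> n \<and> x \<in> Xs n \<longrightarrow> s n i x \<in> Xs (Suc n)) \<and>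
    (\<forall>n i j x. 2 \<le> n \<and> i < j \<and> j \<le> n \<and> x \<in> Xs n \<longrightarrow>
        d (n - 1) i (d n j x) = d (n - 1) (j - 1) (d n i x)) \<and>
    (\<forall>n i j x. i \<le> j \<and> j \<le> n \<and> x \<in> Xs n \<longrightarrow>
        s (Suc n) i (s n j x) = s (Suc n) (Suc j) (s n i x)) \<and>
    (\<forall>n i j x. i < j \<and> j \<le> n \<and> x \<in> Xs n \<longrightarrow>
        d (Suc n) i (s n j x) = s (n - 1) (j - 1) (d n i x)) \<and>
    (\<forall>n j x. j \<le> n \<and> x \<in> Xs n \<longrightarrow> d (Suc n) j (s n j x) = x \<and> d (Suc n) (Suc j) (s n j x) = x) \<and>
    (\<forall>n i j x. Suc j < i \<and> i \<le> Suc n \<and> x \<in> Xs n \<longrightarrow>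
        d (Suc n) i (s n j x) = s (n - 1) j (d n (i - 1) x))"

definition nondeg_simplices :: "(nat \<Rightarrow> 'x set) \<Rightarrow> (nat \<Rightarrow> nat \<Rightarrow> 'x \<Rightarrow> 'x) \<Rightarrow> (nat \<times> 'x) set"
  where "nondeg_simplices Xs s =
    {(n, x). x \<in> Xs n \<and> \<not> (\<exists>i<n. \<exists>y\<in>Xs (n - 1). x = s (n - 1) i y)}"

definition finite_simp_set :: "(nat \<Rightarrow> 'x set) \<Rightarrow> (nat \<Rightarrow> nat \<Rightarrow> 'x \<Rightarrow> 'x) \<Rightarrow> (nat \<Rightarrow> nat \<Rightarrow> 'x \<Rightarrow> 'x) \<Rightarrow> bool"
  where "finite_simp_set Xs d s \<longleftrightarrow> simp_set Xs d s \<and> finite (nondeg_simplices Xs s)"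

definition simp_group :: "(nat \<Rightarrow> 'g monoid) \<Rightarrow> (nat \<Rightarrow> nat \<Rightarrow> 'g \<Rightarrow> 'g) \<Rightarrow> (nat \<Rightarrow> nat \<Rightarrow> 'g \<Rightarrow> 'g) \<Rightarrow> bool"
  where "simp_group G d s \<longleftrightarrow> simp_set (\<lambda>n. carrier (G n)) d s \<and> (\<forall>n. group (G n)) \<and>
    (\<forall>n i. 0 < n \<and> i \<le> n \<longrightarrow> d n i \<in> hom (G n) (G (n - 1))) \<and>
    (\<forall>n i. i \<le> n \<longrightarrow> s n i \<in> hom (G n) (G (Suc n)))"

definition simp_action ::
  "(nat \<Rightarrow> 'g monoid) \<Rightarrow> (nat \<Rightarrow> nat \<Rightarrow> 'g \<Rightarrow> 'g) \<Rightarrow> (nat \<Rightarrow> nat \<Rightarrow> 'g \<Rightarrow> 'g) \<Rightarrow>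
   (nat \<Rightarrow> 'f set) \<Rightarrow> (nat \<Rightarrow> nat \<Rightarrow> 'f \<Rightarrow> 'f) \<Rightarrow> (nat \<Rightarrow> nat \<Rightarrow> 'f \<Rightarrow> 'f) \<Rightarrow>
   (nat \<Rightarrow> 'g \<Rightarrow> 'f \<Rightarrow> 'f) \<Rightarrow> bool"
  where "simp_action G dG sG F dF sF act \<longleftrightarrow>
    (\<forall>n. \<forall>g\<in>carrier (G n). \<forall>x\<in>F n. act n g x \<in> F n) \<and>
    (\<forall>n. \<forall>x\<in>F n. act n \<one>\<^bsub>G n\<^esub> x = x) \<and>
    (\<forall>n. \<forall>g\<in>carrier (G n). \<forall>h\<in>carrier (G n). \<forall>x\<in>F n.
        act n (g \<otimes>\<^bsub>G n\<^esub> h) x = act n g (act n h x)) \<and>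
    (\<forall>n i. 0 < n \<and> i \<le> n \<longrightarrow> (\<forall>g\<in>carrier (G n). \<forall>x\<in>F n.
        dF n i (act n g x) = act (n - 1) (dG n i g) (dF n i x))) \<and>
    (\<forall>n i. i \<le> n \<longrightarrow> (\<forall>g\<in>carrier (G n). \<forall>x\<in>F n.
        sF n i (act n g x) = act (Suc n) (sG n i g) (sF n i x)))"

definition twisting_function ::
  "(nat \<Rightarrow> 'g monoid) \<Rightarrow> (nat \<Rightarrow> nat \<Rightarrow> 'g \<Rightarrow> 'g) \<Rightarrow> (nat \<Rightarrow> nat \<Rightarrow> 'g \<Rightarrow> 'g) \<Rightarrow>
   (nat \<Rightarrow> 'b set) \<Rightarrow> (nat \<Rightarrow> nat \<Rightarrow> 'b \<Rightarrow> 'b) \<Rightarrow> (nat \<Rightarrow> nat \<Rightarrow> 'b \<Rightarrow> 'b) \<Rightarrow>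
   (nat \<Rightarrow> 'b \<Rightarrow> 'g) \<Rightarrow> bool"
  where "twisting_function G dG sG B dB sB tau \<longleftrightarrow>
    (\<forall>q. \<forall>b\<in>B q. 0 < q \<longrightarrow> tau q b \<in> carrier (G (q - 1))) \<and>
    (\<forall>q. \<forall>b\<in>B q. 1 < q \<longrightarrow>
        dG (q - 1) 0 (tau q b) =
          inv\<^bsub>G (q - 2)\<^esub> (tau (q - 1) (dB q 0 b)) \<otimes>\<^bsub>G (q - 2)\<^esub> tau (q - 1) (dB q 1 b)) \<and>
    (\<forall>q i. \<forall>b\<in>B q. 1 < q \<and> 1 \<le> i \<and> Suc i \<le> q \<longrightarrow>
        tau (q - 1) (dB q (Suc i) b) = dG (q - 1) i (tau q b)) \<and>
    (\<forall>q i. \<forall>b\<in>B q. 0 < q \<and> i < q \<longrightarrow>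
        tau (Suc q) (sB q (Suc i) b) = sG (q - 1) i (tau q b)) \<and>
    (\<forall>q. \<forall>b\<in>B q. tau (Suc q) (sB q 0 b) = \<one>\<^bsub>G q\<^esub>)"

definition tcp_set :: "(nat \<Rightarrow> 'f set) \<Rightarrow> (nat \<Rightarrow> 'b set) \<Rightarrow> nat \<Rightarrow> ('f \<times> 'b) set"
  where "tcp_set F B n = F n \<times> B n"

definition tcp_face ::
  "(nat \<Rightarrow> 'g \<Rightarrow> 'f \<Rightarrow> 'f) \<Rightarrow> (nat \<Rightarrow> 'b \<Rightarrow> 'g) \<Rightarrow> (nat \<Rightarrow> nat \<Rightarrow> 'f \<Rightarrow> 'f) \<Rightarrow>
   (nat \<Rightarrow> nat \<Rightarrow> 'b \<Rightarrow> 'b) \<Rightarrow> nat \<Rightarrow> nat \<Rightarrow> 'f \<times> 'b \<Rightarrow> 'f \<times> 'b"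
  where "tcp_face act tau dF dB n i = (\<lambda>(f, b).
     if i = 0 then (act (n - 1) (tau n b) (dF n 0 f), dB n 0 b) else (dF n i f, dB n i b))"

definition tcp_degen ::
  "(nat \<Rightarrow> nat \<Rightarrow> 'f \<Rightarrow> 'f) \<Rightarrow> (nat \<Rightarrow> nat \<Rightarrow> 'b \<Rightarrow> 'b) \<Rightarrow> nat \<Rightarrow> nat \<Rightarrow> 'f \<times> 'b \<Rightarrow> 'f \<times> 'b"
  where "tcp_degen sF sB n i = (\<lambda>(f, b). (sF n i f, sB n i b))"

text \<open>Polynomial ring over R in the variables V (monomials = multisets of
  variables, polynomials = finitely supported coefficient functions).\<close>

definition poly_ring :: "('r, 'm) ring_scheme \<Rightarrow> 'v set \<Rightarrow> ('v multiset \<Rightarrow> 'r) ring"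
  where "poly_ring R V =
    \<lparr>carrier = {P. (\<forall>m. P m \<in> carrier R) \<and> finite {m. P m \<noteq> \<zero>\<^bsub>R\<^esub>} \<and>
                   (\<forall>m. P m \<noteq> \<zero>\<^bsub>R\<^esub> \<longrightarrow> set_mset m \<subseteq> V)},
     Group.monoid.mult = (\<lambda>P Q m. finsum R (\<lambda>m1. P m1 \<otimes>\<^bsub>R\<^esub> Q (m - m1)) {m1. m1 \<subseteq># m}),
     Group.monoid.one = (\<lambda>m. if m = {#} then \<one>\<^bsub>R\<^esub> else \<zero>\<^bsub>R\<^esub>),
     Ring.ring.zero = (\<lambda>m. \<zero>\<^bsub>R\<^esub>),
     Ring.ring.add = (\<lambda>P Q m. P m \<oplus>\<^bsub>R\<^esub> Q m)\<rparr>"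

definition pvar :: "('r, 'm) ring_scheme \<Rightarrow> 'v \<Rightarrow> ('v multiset \<Rightarrow> 'r)"
  where "pvar R v = (\<lambda>m. if m = {#v#} then \<one>\<^bsub>R\<^esub> else \<zero>\<^bsub>R\<^esub>)"

definition pconst :: "('r, 'm) ring_scheme \<Rightarrow> 'r \<Rightarrow> ('v multiset \<Rightarrow> 'r)"
  where "pconst R r = (\<lambda>m. if m = {#} then r else \<zero>\<^bsub>R\<^esub>)"

text \<open>Relations making the polynomial ring on the symbols (i, a), i in I, a in A,
  into the tensor product over R of copies of A indexed by I
  (the coproduct of commutative R-algebras): each i-th factor map a -> (i,a)
  is a unital ring homomorphism compatible with the structure maps from R.\<close>
definition tensor_rels :: "('r, 'm) ring_scheme \<Rightarrow> ('a, 'n) ring_scheme \<Rightarrow> ('r \<Rightarrow> 'a) \<Rightarrow> 'i set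
    \<Rightarrow> (('i \<times> 'a) multiset \<Rightarrow> 'r) set"
  where "tensor_rels R A eta I =
    (let P = poly_ring R (I \<times> carrier A) in
     {pvar R (i, a \<oplus>\<^bsub>A\<^esub> b) \<ominus>\<^bsub>P\<^esub> (pvar R (i, a) \<oplus>\<^bsub>P\<^esub> pvar R (i, b)) | i a b.
        i \<in> I \<and> a \<in> carrier A \<and> b \<in> carrier A} \<union>
     {pvar R (i, a \<otimes>\<^bsub>A\<^esub> b) \<ominus>\<^bsub>P\<^esub> (pvar R (i, a) \<otimes>\<^bsub>P\<^esub> pvar R (i, b)) | i a b.
        i \<in> I \<and> a \<in> carrier A \<and> b \<in> carrier A} \<union>
     {pvar R (i, \<one>\<^bsub>A\<^esub>) \<ominus>\<^bsub>P\<^esub> \<one>\<^bsub>P\<^esub> | i. i \<in> I} \<union>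
     {pvar R (i, eta r) \<ominus>\<^bsub>P\<^esub> pconst R r | i r. i \<in> I \<and> r \<in> carrier R})"

definition tensor_ideal :: "('r, 'm) ring_scheme \<Rightarrow> ('a, 'n) ring_scheme \<Rightarrow> ('r \<Rightarrow> 'a) \<Rightarrow> 'i set
    \<Rightarrow> (('i \<times> 'a) multiset \<Rightarrow> 'r) set"
  where "tensor_ideal R A eta I = genideal (poly_ring R (I \<times> carrier A)) (tensor_rels R A eta I)"

definition tensor :: "('r, 'm) ring_scheme \<Rightarrow> ('a, 'n) ring_scheme \<Rightarrow> ('r \<Rightarrow> 'a) \<Rightarrow> 'i set
    \<Rightarrow> (('i \<times> 'a) multiset \<Rightarrow> 'r) set ring"
  where "tensor R A eta I = poly_ring R (I \<times> carrier A) Quot tensor_ideal R A eta I"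

text \<open>The element a placed in the i-th tensor factor (1 elsewhere).\<close>
definition tgen :: "('r, 'm) ring_scheme \<Rightarrow> ('a, 'n) ring_scheme \<Rightarrow> ('r \<Rightarrow> 'a) \<Rightarrow> 'i set
    \<Rightarrow> 'i \<Rightarrow> 'a \<Rightarrow> (('i \<times> 'a) multiset \<Rightarrow> 'r) set"
  where "tgen R A eta I i a =
    tensor_ideal R A eta I +>\<^bsub>poly_ring R (I \<times> carrier A)\<^esub> pvar R (i, a)"

definition tunit :: "('r, 'm) ring_scheme \<Rightarrow> ('a, 'n) ring_scheme \<Rightarrow> ('r \<Rightarrow> 'a) \<Rightarrow> 'i set
    \<Rightarrow> 'r \<Rightarrow> (('i \<times> 'a) multiset \<Rightarrow> 'r) set"
  where "tunit R A eta I r =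
    tensor_ideal R A eta I +>\<^bsub>poly_ring R (I \<times> carrier A)\<^esub> pconst R r"

definition prename :: "('r, 'm) ring_scheme \<Rightarrow> ('v \<Rightarrow> 'w) \<Rightarrow> ('v multiset \<Rightarrow> 'r) \<Rightarrow> ('w multiset \<Rightarrow> 'r)"
  where "prename R sigma P = (\<lambda>m'. finsum R P {m. image_mset sigma m = m' \<and> P m \<noteq> \<zero>\<^bsub>R\<^esub>})"

text \<open>The R-algebra map between tensor products induced on monomials by sending the
  symbol (i,a) to sigma (i,a); i.e. the multiplicative extension of
  a in factor i |-> (second component) in factor (first component), with empty
  products equal to 1.  Defined on cosets via a representative.\<close>
definition tmap :: "('r, 'm) ring_scheme \<Rightarrow> ('a2, 'n) ring_scheme \<Rightarrow> ('r \<Rightarrow> 'a2) \<Rightarrow> 'j set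
    \<Rightarrow> ('i \<times> 'a \<Rightarrow> 'j \<times> 'a2) \<Rightarrow> (('i \<times> 'a) multiset \<Rightarrow> 'r) set \<Rightarrow> (('j \<times> 'a2) multiset \<Rightarrow> 'r) set"
  where "tmap R A' eta' J sigma C =
    tensor_ideal R A' eta' J +>\<^bsub>poly_ring R (J \<times> carrier A')\<^esub> prename R sigma (SOME p. p \<in> C)"

definition loday :: "('r, 'm) ring_scheme \<Rightarrow> ('a, 'n) ring_scheme \<Rightarrow> ('r \<Rightarrow> 'a) \<Rightarrow> (nat \<Rightarrow> 'x set)
    \<Rightarrow> nat \<Rightarrow> (('x \<times> 'a) multiset \<Rightarrow> 'r) set ring"
  where "loday R A eta Xs n = tensor R A eta (Xs n)"

definition loday_face :: "('r, 'm) ring_scheme \<Rightarrow> ('a, 'n) ring_scheme \<Rightarrow> ('r \<Rightarrow> 'a) \<Rightarrow> (nat \<Rightarrow> 'x set)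
    \<Rightarrow> (nat \<Rightarrow> nat \<Rightarrow> 'x \<Rightarrow> 'x) \<Rightarrow> nat \<Rightarrow> nat
    \<Rightarrow> (('x \<times> 'a) multiset \<Rightarrow> 'r) set \<Rightarrow> (('x \<times> 'a) multiset \<Rightarrow> 'r) set"
  where "loday_face R A eta Xs d n i = tmap R A eta (Xs (n - 1)) (\<lambda>(x, a). (d n i x, a))"

definition loday_degen :: "('r, 'm) ring_scheme \<Rightarrow> ('a, 'n) ring_scheme \<Rightarrow> ('r \<Rightarrow> 'a) \<Rightarrow> (nat \<Rightarrow> 'x set)
    \<Rightarrow> (nat \<Rightarrow> nat \<Rightarrow> 'x \<Rightarrow> 'x) \<Rightarrow> nat \<Rightarrow> nat
    \<Rightarrow> (('x \<times> 'a) multiset \<Rightarrow> 'r) set \<Rightarrow> (('x \<times> 'a) multiset \<Rightarrow> 'r) set"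
  where "loday_degen R A eta Xs s n i = tmap R A eta (Xs (Suc n)) (\<lambda>(x, a). (s n i x, a))"

text \<open>Left action of G on L_F(A): g . (tensor of a_f) = tensor of a_{g^-1 f},
  i.e. the element in factor f is moved to factor g f.\<close>
definition loday_act :: "('r, 'm) ring_scheme \<Rightarrow> ('a, 'n) ring_scheme \<Rightarrow> ('r \<Rightarrow> 'a) \<Rightarrow> (nat \<Rightarrow> 'f set)
    \<Rightarrow> (nat \<Rightarrow> 'g \<Rightarrow> 'f \<Rightarrow> 'f) \<Rightarrow> nat \<Rightarrow> 'g
    \<Rightarrow> (('f \<times> 'a) multiset \<Rightarrow> 'r) set \<Rightarrow> (('f \<times> 'a) multiset \<Rightarrow> 'r) set"
  where "loday_act R A eta F act n g = tmap R A eta (F n) (\<lambda>(f, a). (act n g f, a))"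

definition twloday :: "('r, 'm) ring_scheme \<Rightarrow> (nat \<Rightarrow> ('c, 'n) ring_scheme) \<Rightarrow> (nat \<Rightarrow> 'r \<Rightarrow> 'c)
    \<Rightarrow> (nat \<Rightarrow> 'b set) \<Rightarrow> nat \<Rightarrow> (('b \<times> 'c) multiset \<Rightarrow> 'r) set ring"
  where "twloday R C etaC B n = tensor R (C n) (etaC n) (B n)"

definition twloday_face :: "('r, 'm) ring_scheme \<Rightarrow> (nat \<Rightarrow> ('c, 'n) ring_scheme) \<Rightarrow> (nat \<Rightarrow> 'r \<Rightarrow> 'c)
    \<Rightarrow> (nat \<Rightarrow> nat \<Rightarrow> 'c \<Rightarrow> 'c) \<Rightarrow> (nat \<Rightarrow> 'g \<Rightarrow> 'c \<Rightarrow> 'c)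
    \<Rightarrow> (nat \<Rightarrow> 'b set) \<Rightarrow> (nat \<Rightarrow> nat \<Rightarrow> 'b \<Rightarrow> 'b) \<Rightarrow> (nat \<Rightarrow> 'b \<Rightarrow> 'g) \<Rightarrow> nat \<Rightarrow> nat
    \<Rightarrow> (('b \<times> 'c) multiset \<Rightarrow> 'r) set \<Rightarrow> (('b \<times> 'c) multiset \<Rightarrow> 'r) set"
  where "twloday_face R C etaC dC actC B dB tau n i =
    (if i = 0 then tmap R (C (n - 1)) (etaC (n - 1)) (B (n - 1))
                     (\<lambda>(b, c). (dB n 0 b, actC (n - 1) (tau n b) (dC n 0 c)))
     else tmap R (C (n - 1)) (etaC (n - 1)) (B (n - 1)) (\<lambda>(b, c). (dB n i b, dC n i c)))"

definition twloday_degen :: "('r, 'm) ring_scheme \<Rightarrow> (nat \<Rightarrow> ('c, 'n) ring_scheme) \<Rightarrow> (nat \<Rightarrow> 'r \<Rightarrow> 'c)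
    \<Rightarrow> (nat \<Rightarrow> nat \<Rightarrow> 'c \<Rightarrow> 'c) \<Rightarrow> (nat \<Rightarrow> 'b set) \<Rightarrow> (nat \<Rightarrow> nat \<Rightarrow> 'b \<Rightarrow> 'b) \<Rightarrow> nat \<Rightarrow> nat
    \<Rightarrow> (('b \<times> 'c) multiset \<Rightarrow> 'r) set \<Rightarrow> (('b \<times> 'c) multiset \<Rightarrow> 'r) set"
  where "twloday_degen R C etaC sC B sB n i =
    tmap R (C (Suc n)) (etaC (Suc n)) (B (Suc n)) (\<lambda>(b, c). (sB n i b, sC n i c))"

end

theory Submission
  imports Defs
begin

text \<open>The tensor product over \<open>R\<close> of copies of \<open>A\<close> indexed by \<open>I\<close> is a polynomial ring over \<open>R\<close>
  in symbols \<open>(i, a)\<close> modulo the relations making each \<open>a \<mapsto> (i, a)\<close> a map of \<open>R\<close>-algebras, so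
  it is the coproduct of \<open>I\<close> copies of \<open>A\<close> among commutative \<open>R\<close>-algebras. Consequently the
  tensor product indexed by \<open>X \<times> Y\<close> and the tensor product over \<open>Y\<close> of the tensor products
  indexed by \<open>X\<close> are both coproducts of \<open>X \<times> Y\<close> copies of \<open>A\<close>, and the map \<open>regroup\<close>, sending
  \<open>a\<close> in factor \<open>(x, y)\<close> to (\<open>a\<close> in factor \<open>x\<close>) in factor \<open>y\<close>, is an isomorphism. In degree \<open>n\<close>
  it identifies the Loday construction of \<open>E(\<tau>)\<close> with the twisted Loday construction over \<open>B\<close>.

  Every face and degeneracy of \<open>E(\<tau>)\<close> has the fibred form \<open>(f, b) \<mapsto> (e\<^sub>1 f b, e\<^sub>2 b)\<close>, and
  regrouping turns the map it induces into \<open>e\<^sub>2\<close> on the outer factors combined with the algebra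
  maps induced by \<open>e\<^sub>1 _ b\<close> on the inner ones. For \<open>d\<^sub>0\<close> these are \<open>d\<^sub>0\<close> followed by the action
  of \<open>\<tau>(b)\<close>, which is exactly the twisted face.\<close>

section \<open>The polynomial ring\<close>

lemma finite_submultisets: "finite {m'. m' \<subseteq># (m :: 'v multiset)}"
proof -
  have "{m'. m' \<subseteq># m} \<subseteq> mset ` {ys. set ys \<subseteq> set_mset m \<and> length ys \<le> size m}"
  proof
    fix m' assume "m' \<in> {m'. m' \<subseteq># m}"
    moreover obtain ys where "m' = mset ys" using ex_mset by metis
    ultimately show "m' \<in> mset ` {ys. set ys \<subseteq> set_mset m \<and> length ys \<le> size m}"
      by (metis (mono_tags, lifting) image_eqI mem_Collect_eq mset_subset_eqD
          set_mset_mset size_mset size_mset_mono subsetI)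
  qed
  moreover have "finite {ys. set ys \<subseteq> set_mset m \<and> length ys \<le> size m}"
    using finite_lists_length_le by blast
  ultimately show ?thesis by (meson finite_imageI finite_subset)
qed

definition pmono :: "('r, 'm) ring_scheme \<Rightarrow> 'r \<Rightarrow> 'v multiset \<Rightarrow> ('v multiset \<Rightarrow> 'r)"
  where "pmono R r a = (\<lambda>m. if m = a then r else \<zero>\<^bsub>R\<^esub>)"

context cring
begin

lemma finsum_nonzero_term:
  assumes "f \<in> A \<rightarrow> carrier R" "(\<Oplus>i\<in>A. f i) \<noteq> \<zero>"
  shows "\<exists>i\<in>A. f i \<noteq> \<zero>"
proof (rule ccontr)
  assume "\<not> ?thesis"
  hence "(\<Oplus>i\<in>A. f i) = (\<Oplus>i\<in>A. \<zero>)" by (intro finsum_cong') auto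
  thus False using assms by simp
qed

lemma finsum_if_eq:
  assumes "finite A" "c \<in> carrier R"
  shows "(\<Oplus>x\<in>A. if x = a then c else \<zero>) = (if a \<in> A then c else \<zero>)"
proof (cases "a \<in> A")
  case True
  thus ?thesis using add.finprod_singleton_swap[of a A "\<lambda>_. c"] assms by simp
next
  case False
  hence "(\<Oplus>x\<in>A. if x = a then c else \<zero>) = (\<Oplus>x\<in>A. \<zero>)" by (intro finsum_cong') auto
  thus ?thesis using False by simp
qed

lemma poly_ring_carrier: "P \<in> carrier (poly_ring R V) \<longleftrightarrow>
  (\<forall>m. P m \<in> carrier R) \<and> finite {m. P m \<noteq> \<zero>} \<and> (\<forall>m. P m \<noteq> \<zero> \<longrightarrow> set_mset m \<subseteq> V)"
  by (simp add: poly_ring_def)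

lemma poly_ring_add: "P \<oplus>\<^bsub>poly_ring R V\<^esub> Q = (\<lambda>m. P m \<oplus> Q m)"
  by (simp add: poly_ring_def)

lemma poly_ring_zero: "\<zero>\<^bsub>poly_ring R V\<^esub> = (\<lambda>m. \<zero>)"
  by (simp add: poly_ring_def)

lemma poly_ring_one: "\<one>\<^bsub>poly_ring R V\<^esub> = pmono R \<one> {#}"
  by (simp add: poly_ring_def pmono_def)

lemma poly_ring_mult:
  "P \<otimes>\<^bsub>poly_ring R V\<^esub> Q = (\<lambda>m. \<Oplus>m'\<in>{m'. m' \<subseteq># m}. P m' \<otimes> Q (m - m'))"
  by (simp add: poly_ring_def)

lemma pvar_eq_pmono: "pvar R x = pmono R \<one> {#x#}"
  by (simp add: pvar_def pmono_def)

lemma pconst_eq_pmono: "pconst R r = pmono R r {#}"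
  by (simp add: pconst_def pmono_def)

lemma pmono_closed:
  assumes "r \<in> carrier R" "r \<noteq> \<zero> \<Longrightarrow> set_mset a \<subseteq> V"
  shows "pmono R r a \<in> carrier (poly_ring R V)"
proof -
  have "{m. pmono R r a m \<noteq> \<zero>} \<subseteq> {a}" by (auto simp: pmono_def)
  hence "finite {m. pmono R r a m \<noteq> \<zero>}" by (rule finite_subset) simp
  thus ?thesis using assms by (auto simp: poly_ring_carrier pmono_def)
qed

lemma pvar_closed: "x \<in> V \<Longrightarrow> pvar R x \<in> carrier (poly_ring R V)"
  unfolding pvar_eq_pmono by (rule pmono_closed) auto

lemma pconst_closed: "r \<in> carrier R \<Longrightarrow> pconst R r \<in> carrier (poly_ring R V)"
  unfolding pconst_eq_pmono by (rule pmono_closed) auto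

lemma poly_ring_abelian_group: "abelian_group (poly_ring R V)"
proof (rule abelian_groupI)
  fix x y assume x: "x \<in> carrier (poly_ring R V)" and y: "y \<in> carrier (poly_ring R V)"
  have "{m. x m \<oplus> y m \<noteq> \<zero>} \<subseteq> {m. x m \<noteq> \<zero>} \<union> {m. y m \<noteq> \<zero>}"
    using x y by (auto simp: poly_ring_carrier)
  moreover have "finite {m. x m \<noteq> \<zero>}" "finite {m. y m \<noteq> \<zero>}"
    using x y by (simp_all add: poly_ring_carrier)
  ultimately have "finite {m. x m \<oplus> y m \<noteq> \<zero>}" by (meson finite_UnI finite_subset)
  moreover have "\<forall>m. x m \<oplus> y m \<noteq> \<zero> \<longrightarrow> set_mset m \<subseteq> V"
    using x y by (metis l_zero poly_ring_carrier)
  ultimately show "x \<oplus>\<^bsub>poly_ring R V\<^esub> y \<in> carrier (poly_ring R V)"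
    using x y by (simp add: poly_ring_carrier poly_ring_add)
  show "x \<oplus>\<^bsub>poly_ring R V\<^esub> y = y \<oplus>\<^bsub>poly_ring R V\<^esub> x"
    using x y by (auto simp: poly_ring_add poly_ring_carrier add.m_comm)
  fix z assume z: "z \<in> carrier (poly_ring R V)"
  show "x \<oplus>\<^bsub>poly_ring R V\<^esub> y \<oplus>\<^bsub>poly_ring R V\<^esub> z = x \<oplus>\<^bsub>poly_ring R V\<^esub> (y \<oplus>\<^bsub>poly_ring R V\<^esub> z)"
    using x y z by (auto simp: poly_ring_add poly_ring_carrier add.m_assoc)
next
  show "\<zero>\<^bsub>poly_ring R V\<^esub> \<in> carrier (poly_ring R V)"
    by (simp add: poly_ring_carrier poly_ring_zero)
next
  fix x assume x: "x \<in> carrier (poly_ring R V)"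
  show "\<zero>\<^bsub>poly_ring R V\<^esub> \<oplus>\<^bsub>poly_ring R V\<^esub> x = x"
    using x by (auto simp: poly_ring_add poly_ring_zero poly_ring_carrier)
  have "{m. \<ominus> x m \<noteq> \<zero>} = {m. x m \<noteq> \<zero>}" using x by (auto simp: poly_ring_carrier)
  hence "(\<lambda>m. \<ominus> x m) \<in> carrier (poly_ring R V)" using x by (auto simp: poly_ring_carrier)
  moreover have "(\<lambda>m. \<ominus> x m) \<oplus>\<^bsub>poly_ring R V\<^esub> x = \<zero>\<^bsub>poly_ring R V\<^esub>"
    using x by (auto simp: poly_ring_add poly_ring_zero poly_ring_carrier l_neg)
  ultimately show "\<exists>y\<in>carrier (poly_ring R V). y \<oplus>\<^bsub>poly_ring R V\<^esub> x = \<zero>\<^bsub>poly_ring R V\<^esub>"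
    by blast
qed

lemma poly_ring_add_closed:
  "P \<in> carrier (poly_ring R V) \<Longrightarrow> Q \<in> carrier (poly_ring R V) \<Longrightarrow>
   P \<oplus>\<^bsub>poly_ring R V\<^esub> Q \<in> carrier (poly_ring R V)"
  by (rule abelian_monoid.a_closed[OF abelian_group.axioms(1)[OF poly_ring_abelian_group]])

lemma poly_ring_zero_closed: "\<zero>\<^bsub>poly_ring R V\<^esub> \<in> carrier (poly_ring R V)"
  by (rule abelian_monoid.zero_closed[OF abelian_group.axioms(1)[OF poly_ring_abelian_group]])

lemma poly_ring_mult_closed:
  assumes x: "x \<in> carrier (poly_ring R V)" and y: "y \<in> carrier (poly_ring R V)"
  shows "x \<otimes>\<^bsub>poly_ring R V\<^esub> y \<in> carrier (poly_ring R V)"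
proof -
  let ?f = "\<lambda>m m'. x m' \<otimes> y (m - m')"
  have f: "?f m \<in> {m'. m' \<subseteq># m} \<rightarrow> carrier R" for m
    using x y by (auto simp: poly_ring_carrier)
  have split: "\<exists>m'. m' \<subseteq># m \<and> x m' \<noteq> \<zero> \<and> y (m - m') \<noteq> \<zero>"
    if "(\<Oplus>m'\<in>{m'. m' \<subseteq># m}. ?f m m') \<noteq> \<zero>" for m
    using finsum_nonzero_term[OF f that] x y by (auto simp: poly_ring_carrier)
  have "{m. (\<Oplus>m'\<in>{m'. m' \<subseteq># m}. ?f m m') \<noteq> \<zero>}
      \<subseteq> (\<lambda>(a, b). a + b) ` ({m. x m \<noteq> \<zero>} \<times> {m. y m \<noteq> \<zero>})"
  proof
    fix m assume "m \<in> {m. (\<Oplus>m'\<in>{m'. m' \<subseteq># m}. ?f m m') \<noteq> \<zero>}"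
    then obtain m' where "m' \<subseteq># m" "x m' \<noteq> \<zero>" "y (m - m') \<noteq> \<zero>" using split by blast
    thus "m \<in> (\<lambda>(a, b). a + b) ` ({m. x m \<noteq> \<zero>} \<times> {m. y m \<noteq> \<zero>})"
      by (intro image_eqI[of _ _ "(m', m - m')"]) auto
  qed
  hence "finite {m. (\<Oplus>m'\<in>{m'. m' \<subseteq># m}. ?f m m') \<noteq> \<zero>}"
    by (rule finite_subset) (use x y in \<open>simp add: poly_ring_carrier\<close>)
  moreover have "set_mset m \<subseteq> V" if nz: "(\<Oplus>m'\<in>{m'. m' \<subseteq># m}. ?f m m') \<noteq> \<zero>" for m
  proof -
    obtain m' where m': "m' \<subseteq># m" "x m' \<noteq> \<zero>" "y (m - m') \<noteq> \<zero>" using split[OF nz] by blast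
    hence "set_mset m = set_mset m' \<union> set_mset (m - m')"
      by (metis set_mset_union subset_mset.add_diff_inverse)
    thus ?thesis using m' x y by (auto simp: poly_ring_carrier)
  qed
  ultimately show ?thesis using f unfolding poly_ring_mult poly_ring_carrier
    by (auto intro!: finsum_closed)
qed

lemma pmono_mult:
  assumes "r \<in> carrier R" "s \<in> carrier R"
  shows "pmono R r a \<otimes>\<^bsub>poly_ring R V\<^esub> pmono R s b = pmono R (r \<otimes> s) (a + b)"
proof
  fix m
  have "(\<Oplus>m'\<in>{m'. m' \<subseteq># m}. pmono R r a m' \<otimes> pmono R s b (m - m'))
      = (\<Oplus>m'\<in>{m'. m' \<subseteq># m}. if m' = a then (if m = a + b then r \<otimes> s else \<zero>) else \<zero>)"
    using assms by (intro finsum_cong') (auto simp: pmono_def)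
  also have "\<dots> = pmono R (r \<otimes> s) (a + b) m"
    using assms by (subst finsum_if_eq) (auto simp: finite_submultisets pmono_def)
  finally show "(pmono R r a \<otimes>\<^bsub>poly_ring R V\<^esub> pmono R s b) m = pmono R (r \<otimes> s) (a + b) m"
    by (simp add: poly_ring_mult)
qed

lemma poly_ring_l_one:
  assumes x: "x \<in> carrier (poly_ring R V)"
  shows "\<one>\<^bsub>poly_ring R V\<^esub> \<otimes>\<^bsub>poly_ring R V\<^esub> x = x"
proof
  fix m
  have "(\<Oplus>m'\<in>{m'. m' \<subseteq># m}. pmono R \<one> {#} m' \<otimes> x (m - m'))
      = (\<Oplus>m'\<in>{m'. m' \<subseteq># m}. if m' = {#} then x m else \<zero>)"
    using x by (intro finsum_cong') (auto simp: pmono_def poly_ring_carrier)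
  also have "\<dots> = x m"
    using x by (subst finsum_if_eq) (auto simp: finite_submultisets poly_ring_carrier)
  finally show "(\<one>\<^bsub>poly_ring R V\<^esub> \<otimes>\<^bsub>poly_ring R V\<^esub> x) m = x m"
    by (simp add: poly_ring_mult poly_ring_one)
qed

lemma poly_ring_mult_zero:
  assumes x: "x \<in> carrier (poly_ring R V)"
  shows "\<zero>\<^bsub>poly_ring R V\<^esub> \<otimes>\<^bsub>poly_ring R V\<^esub> x = \<zero>\<^bsub>poly_ring R V\<^esub>"
    and "x \<otimes>\<^bsub>poly_ring R V\<^esub> \<zero>\<^bsub>poly_ring R V\<^esub> = \<zero>\<^bsub>poly_ring R V\<^esub>"
  using x by (auto simp: poly_ring_mult poly_ring_zero poly_ring_carrier
      intro!: finsum_cong'[where g = "\<lambda>_. \<zero>", THEN trans])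

lemma poly_ring_distr:
  assumes x: "x \<in> carrier (poly_ring R V)" and y: "y \<in> carrier (poly_ring R V)"
    and z: "z \<in> carrier (poly_ring R V)"
  shows "(x \<oplus>\<^bsub>poly_ring R V\<^esub> y) \<otimes>\<^bsub>poly_ring R V\<^esub> z =
      x \<otimes>\<^bsub>poly_ring R V\<^esub> z \<oplus>\<^bsub>poly_ring R V\<^esub> y \<otimes>\<^bsub>poly_ring R V\<^esub> z"
    and "z \<otimes>\<^bsub>poly_ring R V\<^esub> (x \<oplus>\<^bsub>poly_ring R V\<^esub> y) =
      z \<otimes>\<^bsub>poly_ring R V\<^esub> x \<oplus>\<^bsub>poly_ring R V\<^esub> z \<otimes>\<^bsub>poly_ring R V\<^esub> y"
  using x y z
  by (auto simp: poly_ring_mult poly_ring_add poly_ring_carrier l_distr r_distr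
      intro!: finsum_cong' finsum_addf[symmetric, THEN trans])

lemma poly_induct [consumes 1, case_names zero monom add]:
  assumes "P \<in> carrier (poly_ring R V)"
    and zero: "Phi \<zero>\<^bsub>poly_ring R V\<^esub>"
    and monom: "\<And>r a. r \<in> carrier R \<Longrightarrow> r \<noteq> \<zero> \<Longrightarrow> set_mset a \<subseteq> V \<Longrightarrow> Phi (pmono R r a)"
    and add: "\<And>P Q. P \<in> carrier (poly_ring R V) \<Longrightarrow> Q \<in> carrier (poly_ring R V) \<Longrightarrow>
      Phi P \<Longrightarrow> Phi Q \<Longrightarrow> Phi (P \<oplus>\<^bsub>poly_ring R V\<^esub> Q)"
  shows "Phi P"
proof -
  have "Phi P" if "P \<in> carrier (poly_ring R V)" "card {m. P m \<noteq> \<zero>} = n" for P n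
    using that
  proof (induction n arbitrary: P rule: less_induct)
    case (less n)
    have fin: "finite {m. P m \<noteq> \<zero>}" using less.prems by (simp add: poly_ring_carrier)
    show ?case
    proof (cases "{m. P m \<noteq> \<zero>} = {}")
      case True
      hence "P = \<zero>\<^bsub>poly_ring R V\<^esub>" by (auto simp: poly_ring_zero)
      thus ?thesis using zero by simp
    next
      case False
      then obtain a where a: "P a \<noteq> \<zero>" by auto
      define P' where "P' = P(a := \<zero>)"
      have P': "P' \<in> carrier (poly_ring R V)"
        using less.prems fin unfolding P'_def poly_ring_carrier by (auto elim: finite_subset[rotated])
      have "{m. P' m \<noteq> \<zero>} = {m. P m \<noteq> \<zero>} - {a}" by (auto simp: P'_def)
      hence "card {m. P' m \<noteq> \<zero>} < n"
        using card_Diff1_less[OF fin, of a] a less.prems(2) by simp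
      hence "Phi P'" using less.IH P' by blast
      moreover have "P a \<in> carrier R" "set_mset a \<subseteq> V" using less.prems a by (auto simp: poly_ring_carrier)
      moreover have "P = pmono R (P a) a \<oplus>\<^bsub>poly_ring R V\<^esub> P'"
        using less.prems by (auto simp: poly_ring_add pmono_def P'_def poly_ring_carrier)
      ultimately show ?thesis using add[OF pmono_closed P'] monom a by metis
    qed
  qed
  thus ?thesis using assms(1) by blast
qed

lemma poly_additive_eqI:
  assumes "P \<in> carrier (poly_ring R V)"
    and "f \<zero>\<^bsub>poly_ring R V\<^esub> = g \<zero>\<^bsub>poly_ring R V\<^esub>"
    and "\<And>r a. r \<in> carrier R \<Longrightarrow> r \<noteq> \<zero> \<Longrightarrow> set_mset a \<subseteq> V \<Longrightarrow> f (pmono R r a) = g (pmono R r a)"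
    and "\<And>P Q. P \<in> carrier (poly_ring R V) \<Longrightarrow> Q \<in> carrier (poly_ring R V) \<Longrightarrow>
      f (P \<oplus>\<^bsub>poly_ring R V\<^esub> Q) = comb (f P) (f Q)"
    and "\<And>P Q. P \<in> carrier (poly_ring R V) \<Longrightarrow> Q \<in> carrier (poly_ring R V) \<Longrightarrow>
      g (P \<oplus>\<^bsub>poly_ring R V\<^esub> Q) = comb (g P) (g Q)"
  shows "f P = g P"
  using assms(1) by (induction rule: poly_induct) (simp_all add: assms(2-))

lemma poly_biadditive_eqI:
  assumes P: "P \<in> carrier (poly_ring R V)" and Q: "Q \<in> carrier (poly_ring R V)"
    and zero: "\<And>P. P \<in> carrier (poly_ring R V) \<Longrightarrow> f \<zero>\<^bsub>poly_ring R V\<^esub> P = g \<zero>\<^bsub>poly_ring R V\<^esub> P"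
      "\<And>P. P \<in> carrier (poly_ring R V) \<Longrightarrow> f P \<zero>\<^bsub>poly_ring R V\<^esub> = g P \<zero>\<^bsub>poly_ring R V\<^esub>"
    and monom: "\<And>r a s b. r \<in> carrier R \<Longrightarrow> r \<noteq> \<zero> \<Longrightarrow> set_mset a \<subseteq> V \<Longrightarrow>
      s \<in> carrier R \<Longrightarrow> s \<noteq> \<zero> \<Longrightarrow> set_mset b \<subseteq> V \<Longrightarrow>
      f (pmono R r a) (pmono R s b) = g (pmono R r a) (pmono R s b)"
    and add: "\<And>P1 P2 Q. P1 \<in> carrier (poly_ring R V) \<Longrightarrow> P2 \<in> carrier (poly_ring R V) \<Longrightarrow>
        Q \<in> carrier (poly_ring R V) \<Longrightarrow>
        f (P1 \<oplus>\<^bsub>poly_ring R V\<^esub> P2) Q = comb (f P1 Q) (f P2 Q) \<and>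
        f Q (P1 \<oplus>\<^bsub>poly_ring R V\<^esub> P2) = comb (f Q P1) (f Q P2) \<and>
        g (P1 \<oplus>\<^bsub>poly_ring R V\<^esub> P2) Q = comb (g P1 Q) (g P2 Q) \<and>
        g Q (P1 \<oplus>\<^bsub>poly_ring R V\<^esub> P2) = comb (g Q P1) (g Q P2)"
  shows "f P Q = g P Q"
proof (rule poly_additive_eqI[OF P, where f = "\<lambda>P. f P Q" and g = "\<lambda>P. g P Q" and comb = comb])
  show "f (pmono R r a) Q = g (pmono R r a) Q" if "r \<in> carrier R" "r \<noteq> \<zero>" "set_mset a \<subseteq> V" for r a
    using that pmono_closed[of r a V]
    by (intro poly_additive_eqI[OF Q, where f = "f (pmono R r a)" and g = "g (pmono R r a)" and comb = comb])
       (simp_all add: zero monom add)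
qed (simp_all add: Q zero add)

lemma poly_ring_m_comm:
  assumes "x \<in> carrier (poly_ring R V)" and "y \<in> carrier (poly_ring R V)"
  shows "x \<otimes>\<^bsub>poly_ring R V\<^esub> y = y \<otimes>\<^bsub>poly_ring R V\<^esub> x"
  using assms
  by (rule poly_biadditive_eqI[where f = "\<lambda>x y. x \<otimes>\<^bsub>poly_ring R V\<^esub> y"
        and g = "\<lambda>x y. y \<otimes>\<^bsub>poly_ring R V\<^esub> x" and comb = "(\<oplus>\<^bsub>poly_ring R V\<^esub>)"])
     (simp_all add: poly_ring_mult_zero poly_ring_distr pmono_mult m_comm add.commute)

lemma poly_ring_m_assoc:
  assumes x: "x \<in> carrier (poly_ring R V)" and y: "y \<in> carrier (poly_ring R V)"
    and z: "z \<in> carrier (poly_ring R V)"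
  shows "(x \<otimes>\<^bsub>poly_ring R V\<^esub> y) \<otimes>\<^bsub>poly_ring R V\<^esub> z = x \<otimes>\<^bsub>poly_ring R V\<^esub> (y \<otimes>\<^bsub>poly_ring R V\<^esub> z)"
proof -
  let ?P = "poly_ring R V"
  note closed = poly_ring_mult_closed poly_ring_add_closed poly_ring_zero_closed
  have monom_monom: "(pmono R r a \<otimes>\<^bsub>?P\<^esub> pmono R s b) \<otimes>\<^bsub>?P\<^esub> z = pmono R r a \<otimes>\<^bsub>?P\<^esub> (pmono R s b \<otimes>\<^bsub>?P\<^esub> z)"
    if r: "r \<in> carrier R" "r \<noteq> \<zero>" "set_mset a \<subseteq> V"
      and s: "s \<in> carrier R" "s \<noteq> \<zero>" "set_mset b \<subseteq> V" for r a s b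
  proof (rule poly_additive_eqI[OF z, where f = "\<lambda>z. (pmono R r a \<otimes>\<^bsub>?P\<^esub> pmono R s b) \<otimes>\<^bsub>?P\<^esub> z"
        and g = "\<lambda>z. pmono R r a \<otimes>\<^bsub>?P\<^esub> (pmono R s b \<otimes>\<^bsub>?P\<^esub> z)" and comb = "(\<oplus>\<^bsub>?P\<^esub>)"])
    show "(pmono R r a \<otimes>\<^bsub>?P\<^esub> pmono R s b) \<otimes>\<^bsub>?P\<^esub> pmono R t c
        = pmono R r a \<otimes>\<^bsub>?P\<^esub> (pmono R s b \<otimes>\<^bsub>?P\<^esub> pmono R t c)"
      if "t \<in> carrier R" for t c
      using that r s by (simp add: pmono_mult m_assoc add.assoc)
  qed (use pmono_closed[of r a V] pmono_closed[of s b V] r s in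
      \<open>simp_all add: poly_ring_mult_zero poly_ring_distr closed\<close>)
  show ?thesis
    using x y
    by (rule poly_biadditive_eqI[where f = "\<lambda>x y. (x \<otimes>\<^bsub>?P\<^esub> y) \<otimes>\<^bsub>?P\<^esub> z"
          and g = "\<lambda>x y. x \<otimes>\<^bsub>?P\<^esub> (y \<otimes>\<^bsub>?P\<^esub> z)" and comb = "(\<oplus>\<^bsub>?P\<^esub>)"])
       (use z monom_monom in \<open>simp_all add: poly_ring_mult_zero poly_ring_distr closed\<close>)
qed

lemma poly_ring_cring: "cring (poly_ring R V)"
proof (rule cringI)
  show "abelian_group (poly_ring R V)" by (rule poly_ring_abelian_group)
  show "Group.comm_monoid (poly_ring R V)"
    by (rule comm_monoidI[OF poly_ring_mult_closed _ poly_ring_m_assoc poly_ring_l_one poly_ring_m_comm])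
       (auto simp: poly_ring_one intro: pmono_closed)
qed (simp add: poly_ring_distr)

lemma poly_ring_hom_memI:
  assumes S: "ring S"
    and closed: "\<And>P. P \<in> carrier (poly_ring R V) \<Longrightarrow> L P \<in> carrier S"
    and add: "\<And>P Q. P \<in> carrier (poly_ring R V) \<Longrightarrow> Q \<in> carrier (poly_ring R V) \<Longrightarrow>
      L (P \<oplus>\<^bsub>poly_ring R V\<^esub> Q) = L P \<oplus>\<^bsub>S\<^esub> L Q"
    and monom_mult: "\<And>r s a b. r \<in> carrier R \<Longrightarrow> s \<in> carrier R \<Longrightarrow>
      set_mset a \<subseteq> V \<Longrightarrow> set_mset b \<subseteq> V \<Longrightarrow>
      L (pmono R r a \<otimes>\<^bsub>poly_ring R V\<^esub> pmono R s b) = L (pmono R r a) \<otimes>\<^bsub>S\<^esub> L (pmono R s b)"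
    and one: "L \<one>\<^bsub>poly_ring R V\<^esub> = \<one>\<^bsub>S\<^esub>"
  shows "L \<in> ring_hom (poly_ring R V) S"
proof -
  interpret S: ring S by fact
  interpret P: cring "poly_ring R V" by (rule poly_ring_cring)
  let ?P = "poly_ring R V"
  have zero: "L \<zero>\<^bsub>?P\<^esub> = \<zero>\<^bsub>S\<^esub>"
    using add[of "\<zero>\<^bsub>?P\<^esub>" "\<zero>\<^bsub>?P\<^esub>"] closed[of "\<zero>\<^bsub>?P\<^esub>"] by simp
  have mult: "L (P \<otimes>\<^bsub>?P\<^esub> Q) = L P \<otimes>\<^bsub>S\<^esub> L Q" if "P \<in> carrier ?P" "Q \<in> carrier ?P" for P Q
    using that
    by (rule poly_biadditive_eqI[where f = "\<lambda>P Q. L (P \<otimes>\<^bsub>?P\<^esub> Q)"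
          and g = "\<lambda>P Q. L P \<otimes>\<^bsub>S\<^esub> L Q" and comb = "(\<oplus>\<^bsub>S\<^esub>)"])
       (simp_all add: zero closed add monom_mult P.l_distr P.r_distr S.l_distr S.r_distr)
  show ?thesis by (rule ring_hom_memI) (fact closed mult add one)+
qed

lemma pmono_add_mset:
  "r \<in> carrier R \<Longrightarrow> pmono R r (add_mset x a) = pvar R x \<otimes>\<^bsub>poly_ring R V\<^esub> pmono R r a"
  by (simp add: pvar_eq_pmono pmono_mult)

lemma poly_ring_hom_eqI:
  assumes "ring S"
    and h: "h \<in> ring_hom (poly_ring R V) S" and h': "h' \<in> ring_hom (poly_ring R V) S"
    and pvar: "\<And>x. x \<in> V \<Longrightarrow> h (pvar R x) = h' (pvar R x)"
    and pconst: "\<And>r. r \<in> carrier R \<Longrightarrow> h (pconst R r) = h' (pconst R r)"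
    and P: "P \<in> carrier (poly_ring R V)"
  shows "h P = h' P"
proof -
  interpret P: cring "poly_ring R V" by (rule poly_ring_cring)
  have monom: "h (pmono R r a) = h' (pmono R r a)" if r: "r \<in> carrier R" and "set_mset a \<subseteq> V" for r a
    using that(2)
  proof (induction a)
    case empty
    thus ?case using pconst[OF r] by (simp add: pconst_eq_pmono)
  next
    case (add x a)
    hence "pvar R x \<in> carrier (poly_ring R V)" "pmono R r a \<in> carrier (poly_ring R V)"
      using r by (auto intro: pvar_closed pmono_closed)
    thus ?case
      using add.IH add.prems pvar[of x] r
      by (simp add: pmono_add_mset[where V = V] ring_hom_mult[OF h] ring_hom_mult[OF h'])
  qed
  show ?thesis
  proof (rule poly_additive_eqI[OF P, where f = h and g = h' and comb = "(\<oplus>\<^bsub>S\<^esub>)"])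
    show "h \<zero>\<^bsub>poly_ring R V\<^esub> = h' \<zero>\<^bsub>poly_ring R V\<^esub>"
      using ring_hom_zero[OF h P.ring_axioms \<open>ring S\<close>] ring_hom_zero[OF h' P.ring_axioms \<open>ring S\<close>]
      by simp
  qed (simp_all add: monom ring_hom_add[OF h] ring_hom_add[OF h'])
qed

end

definition monom_eval :: "('s, 'n) ring_scheme \<Rightarrow> ('v \<Rightarrow> 's) \<Rightarrow> 'v multiset \<Rightarrow> 's"
  where "monom_eval S v m = finprod S (\<lambda>x. v x [^]\<^bsub>S\<^esub> count m x) (set_mset m)"

definition poly_eval :: "('r, 'm) ring_scheme \<Rightarrow> ('s, 'n) ring_scheme \<Rightarrow> ('r \<Rightarrow> 's) \<Rightarrow> ('v \<Rightarrow> 's)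
    \<Rightarrow> ('v multiset \<Rightarrow> 'r) \<Rightarrow> 's"
  where "poly_eval R S c v P = finsum S (\<lambda>m. c (P m) \<otimes>\<^bsub>S\<^esub> monom_eval S v m) {m. P m \<noteq> \<zero>\<^bsub>R\<^esub>}"

context cring
begin

lemma monom_eval_superset:
  assumes "finite U" "set_mset m \<subseteq> U" "\<And>x. x \<in> U \<Longrightarrow> v x \<in> carrier R"
  shows "monom_eval R v m = (\<Otimes>x\<in>U. v x [^] count m x)"
  unfolding monom_eval_def
  by (rule finprod_mono_neutral_cong_left) (use assms in \<open>auto simp: not_in_iff\<close>)

lemma monom_eval_closed:
  "(\<And>x. x \<in> set_mset m \<Longrightarrow> v x \<in> carrier R) \<Longrightarrow> monom_eval R v m \<in> carrier R"
  unfolding monom_eval_def by (auto intro!: finprod_closed)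

lemma monom_eval_add:
  assumes "\<And>x. x \<in> set_mset a \<union> set_mset b \<Longrightarrow> v x \<in> carrier R"
  shows "monom_eval R v (a + b) = monom_eval R v a \<otimes> monom_eval R v b"
proof -
  let ?X = "set_mset a \<union> set_mset b"
  have "monom_eval R v (a + b) = (\<Otimes>x\<in>?X. v x [^] count (a + b) x)"
    using assms by (intro monom_eval_superset) auto
  also have "\<dots> = (\<Otimes>x\<in>?X. v x [^] count a x \<otimes> v x [^] count b x)"
    using assms by (intro finprod_cong') (auto simp: nat_pow_mult)
  also have "\<dots> = (\<Otimes>x\<in>?X. v x [^] count a x) \<otimes> (\<Otimes>x\<in>?X. v x [^] count b x)"
    using assms by (intro finprod_multf) auto
  also have "\<dots> = monom_eval R v a \<otimes> monom_eval R v b"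
    using assms by (subst (1 2) monom_eval_superset[of ?X]) auto
  finally show ?thesis .
qed

lemma monom_eval_empty: "monom_eval R v {#} = \<one>"
  by (simp add: monom_eval_def)

lemma monom_eval_single: "v x \<in> carrier R \<Longrightarrow> monom_eval R v {#x#} = v x"
  by (simp add: monom_eval_def)

context
  fixes S :: "('s, 'n) ring_scheme" and c :: "'a \<Rightarrow> 's" and v :: "'v \<Rightarrow> 's" and V :: "'v set"
  assumes S: "cring S" and c: "c \<in> ring_hom R S" and v: "\<And>x. x \<in> V \<Longrightarrow> v x \<in> carrier S"
begin

interpretation S: cring S by (rule S)

lemma poly_eval_superset:
  assumes P: "P \<in> carrier (poly_ring R V)" and M: "finite M" "{m. P m \<noteq> \<zero>} \<subseteq> M"
    and MV: "\<And>m. m \<in> M \<Longrightarrow> set_mset m \<subseteq> V"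
  shows "poly_eval R S c v P = (\<Oplus>\<^bsub>S\<^esub>m\<in>M. c (P m) \<otimes>\<^bsub>S\<^esub> monom_eval S v m)"
proof -
  have "monom_eval S v m \<in> carrier S" if "m \<in> M" for m
    using MV[OF that] v by (intro S.monom_eval_closed) auto
  moreover have "c (P m) \<in> carrier S" for m
    using P c by (simp add: poly_ring_carrier ring_hom_closed)
  moreover have "c \<zero> = \<zero>\<^bsub>S\<^esub>" by (rule ring_hom_zero[OF c ring_axioms S.ring_axioms])
  ultimately show ?thesis unfolding poly_eval_def
    by (intro S.add.finprod_mono_neutral_cong_left) (use M in auto)
qed

lemma poly_eval_closed:
  assumes P: "P \<in> carrier (poly_ring R V)"
  shows "poly_eval R S c v P \<in> carrier S"
proof -
  have "c (P m) \<otimes>\<^bsub>S\<^esub> monom_eval S v m \<in> carrier S" if "P m \<noteq> \<zero>" for m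
  proof -
    have "set_mset m \<subseteq> V" using P that by (simp add: poly_ring_carrier)
    hence "monom_eval S v m \<in> carrier S" using v by (intro S.monom_eval_closed) auto
    moreover have "c (P m) \<in> carrier S" using P c by (simp add: poly_ring_carrier ring_hom_closed)
    ultimately show ?thesis by simp
  qed
  thus ?thesis unfolding poly_eval_def by (intro S.finsum_closed) auto
qed

lemma poly_eval_add:
  assumes P: "P \<in> carrier (poly_ring R V)" and Q: "Q \<in> carrier (poly_ring R V)"
  shows "poly_eval R S c v (P \<oplus>\<^bsub>poly_ring R V\<^esub> Q) = poly_eval R S c v P \<oplus>\<^bsub>S\<^esub> poly_eval R S c v Q"
proof -
  let ?M = "{m. P m \<noteq> \<zero>} \<union> {m. Q m \<noteq> \<zero>}"
  have M: "finite ?M" "\<And>m. m \<in> ?M \<Longrightarrow> set_mset m \<subseteq> V"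
    using P Q by (auto simp: poly_ring_carrier)
  have monom: "monom_eval S v m \<in> carrier S" if "m \<in> ?M" for m
    using M(2)[OF that] v by (intro S.monom_eval_closed) auto
  have coeff: "c (P m) \<in> carrier S" "c (Q m) \<in> carrier S" for m
    using P Q c by (simp_all add: poly_ring_carrier ring_hom_closed)
  have "poly_eval R S c v (P \<oplus>\<^bsub>poly_ring R V\<^esub> Q)
      = (\<Oplus>\<^bsub>S\<^esub>m\<in>?M. c ((P \<oplus>\<^bsub>poly_ring R V\<^esub> Q) m) \<otimes>\<^bsub>S\<^esub> monom_eval S v m)"
    using P Q M
    by (intro poly_eval_superset poly_ring_add_closed) (auto simp: poly_ring_add poly_ring_carrier)
  also have "\<dots> = (\<Oplus>\<^bsub>S\<^esub>m\<in>?M. c (P m) \<otimes>\<^bsub>S\<^esub> monom_eval S v m \<oplus>\<^bsub>S\<^esub> c (Q m) \<otimes>\<^bsub>S\<^esub> monom_eval S v m)"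
    using P Q monom coeff
    by (intro S.finsum_cong') (auto simp: poly_ring_add poly_ring_carrier ring_hom_add[OF c] S.l_distr)
  also have "\<dots> = (\<Oplus>\<^bsub>S\<^esub>m\<in>?M. c (P m) \<otimes>\<^bsub>S\<^esub> monom_eval S v m) \<oplus>\<^bsub>S\<^esub>
      (\<Oplus>\<^bsub>S\<^esub>m\<in>?M. c (Q m) \<otimes>\<^bsub>S\<^esub> monom_eval S v m)"
    using monom coeff by (intro S.finsum_addf) auto
  also have "\<dots> = poly_eval R S c v P \<oplus>\<^bsub>S\<^esub> poly_eval R S c v Q"
    using poly_eval_superset[OF P M(1) _ M(2)] poly_eval_superset[OF Q M(1) _ M(2)] by auto
  finally show ?thesis .
qed

lemma poly_eval_pmono:
  assumes r: "r \<in> carrier R" and a: "set_mset a \<subseteq> V"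
  shows "poly_eval R S c v (pmono R r a) = c r \<otimes>\<^bsub>S\<^esub> monom_eval S v a"
proof -
  have "poly_eval R S c v (pmono R r a) = (\<Oplus>\<^bsub>S\<^esub>m\<in>{a}. c (pmono R r a m) \<otimes>\<^bsub>S\<^esub> monom_eval S v m)"
    using r a by (intro poly_eval_superset pmono_closed) (auto simp: pmono_def)
  moreover have "monom_eval S v a \<in> carrier S" using a v by (intro S.monom_eval_closed) auto
  moreover have "c r \<in> carrier S" using r c by (simp add: ring_hom_closed)
  ultimately show ?thesis by (simp add: pmono_def)
qed

lemma poly_eval_hom: "poly_eval R S c v \<in> ring_hom (poly_ring R V) S"
proof (rule poly_ring_hom_memI)
  fix r s a b assume rs: "r \<in> carrier R" "s \<in> carrier R" and ab: "set_mset a \<subseteq> V" "set_mset b \<subseteq> V"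
  have "monom_eval S v a \<in> carrier S" "monom_eval S v b \<in> carrier S"
    using ab v by (auto intro!: S.monom_eval_closed)
  moreover have "c r \<in> carrier S" "c s \<in> carrier S" using rs c by (auto intro: ring_hom_closed)
  moreover have "monom_eval S v (a + b) = monom_eval S v a \<otimes>\<^bsub>S\<^esub> monom_eval S v b"
    using ab v by (intro S.monom_eval_add) auto
  ultimately show "poly_eval R S c v (pmono R r a \<otimes>\<^bsub>poly_ring R V\<^esub> pmono R s b) =
      poly_eval R S c v (pmono R r a) \<otimes>\<^bsub>S\<^esub> poly_eval R S c v (pmono R s b)"
    using rs ab by (simp add: pmono_mult poly_eval_pmono ring_hom_mult[OF c] S.m_ac)
next
  show "poly_eval R S c v \<one>\<^bsub>poly_ring R V\<^esub> = \<one>\<^bsub>S\<^esub>"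
    using c by (simp add: poly_ring_one poly_eval_pmono S.monom_eval_empty ring_hom_one)
qed (simp_all add: poly_eval_closed poly_eval_add S.ring_axioms)

lemma poly_eval_pvar: "x \<in> V \<Longrightarrow> poly_eval R S c v (pvar R x) = v x"
  using v c by (simp add: pvar_eq_pmono poly_eval_pmono S.monom_eval_single ring_hom_one)

lemma poly_eval_pconst: "r \<in> carrier R \<Longrightarrow> poly_eval R S c v (pconst R r) = c r"
  using c by (simp add: pconst_eq_pmono poly_eval_pmono S.monom_eval_empty ring_hom_closed)

end

lemma prename_superset:
  assumes P: "P \<in> carrier (poly_ring R V)" and M: "finite M" "{m. P m \<noteq> \<zero>} \<subseteq> M"
  shows "prename R sigma P m' = (\<Oplus>m\<in>{m\<in>M. image_mset sigma m = m'}. P m)"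
  unfolding prename_def
  by (rule add.finprod_mono_neutral_cong_left) (use P M in \<open>auto simp: poly_ring_carrier\<close>)

lemma prename_closed:
  assumes P: "P \<in> carrier (poly_ring R V)" and sigma: "sigma ` V \<subseteq> W"
  shows "prename R sigma P \<in> carrier (poly_ring R W)"
proof -
  have preimage: "\<exists>m. image_mset sigma m = m' \<and> P m \<noteq> \<zero>" if "prename R sigma P m' \<noteq> \<zero>" for m'
  proof (rule ccontr)
    assume "\<not> ?thesis"
    hence "{m. image_mset sigma m = m' \<and> P m \<noteq> \<zero>} = {}" by auto
    hence "prename R sigma P m' = (\<Oplus>m\<in>{}. P m)" unfolding prename_def by (rule arg_cong)
    thus False using that by simp
  qed
  have "{m'. prename R sigma P m' \<noteq> \<zero>} \<subseteq> image_mset sigma ` {m. P m \<noteq> \<zero>}"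
    using preimage by blast
  moreover have "finite {m. P m \<noteq> \<zero>}" using P by (simp add: poly_ring_carrier)
  ultimately have "finite {m'. prename R sigma P m' \<noteq> \<zero>}" by (blast intro: finite_subset)
  moreover have "set_mset m' \<subseteq> W" if nz: "prename R sigma P m' \<noteq> \<zero>" for m'
  proof -
    obtain m where m: "image_mset sigma m = m'" "P m \<noteq> \<zero>" using preimage[OF nz] by blast
    hence "set_mset m \<subseteq> V" using P by (simp add: poly_ring_carrier)
    thus ?thesis using m sigma by (auto simp: image_subset_iff subset_iff)
  qed
  moreover have "prename R sigma P m' \<in> carrier R" for m'
    unfolding prename_def using P by (intro finsum_closed) (auto simp: poly_ring_carrier)
  ultimately show ?thesis by (simp add: poly_ring_carrier)
qed

lemma prename_add:
  assumes P: "P \<in> carrier (poly_ring R V)" and Q: "Q \<in> carrier (poly_ring R V)"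
  shows "prename R sigma (P \<oplus>\<^bsub>poly_ring R V\<^esub> Q) =
    prename R sigma P \<oplus>\<^bsub>poly_ring R W\<^esub> prename R sigma Q"
proof
  fix m'
  let ?M = "{m. P m \<noteq> \<zero>} \<union> {m. Q m \<noteq> \<zero>}"
  have M: "finite ?M" using P Q by (simp add: poly_ring_carrier)
  have "{m. (P \<oplus>\<^bsub>poly_ring R V\<^esub> Q) m \<noteq> \<zero>} \<subseteq> ?M"
    using P Q by (auto simp: poly_ring_add poly_ring_carrier)
  hence "prename R sigma (P \<oplus>\<^bsub>poly_ring R V\<^esub> Q) m' = (\<Oplus>m\<in>{m\<in>?M. image_mset sigma m = m'}. P m \<oplus> Q m)"
    using prename_superset[OF poly_ring_add_closed[OF P Q] M] by (simp add: poly_ring_add)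
  also have "\<dots> = (\<Oplus>m\<in>{m\<in>?M. image_mset sigma m = m'}. P m) \<oplus> (\<Oplus>m\<in>{m\<in>?M. image_mset sigma m = m'}. Q m)"
    using P Q by (intro finsum_addf) (auto simp: poly_ring_carrier)
  also have "\<dots> = prename R sigma P m' \<oplus> prename R sigma Q m'"
    using prename_superset[OF P M, of sigma m'] prename_superset[OF Q M, of sigma m'] by auto
  finally show "prename R sigma (P \<oplus>\<^bsub>poly_ring R V\<^esub> Q) m' =
      (prename R sigma P \<oplus>\<^bsub>poly_ring R W\<^esub> prename R sigma Q) m'"
    by (simp add: poly_ring_add)
qed

lemma prename_pmono:
  assumes r: "r \<in> carrier R"
  shows "prename R sigma (pmono R r a) = pmono R r (image_mset sigma a)"
proof
  fix m'
  have "prename R sigma (pmono R r a) m' = (\<Oplus>m\<in>{m\<in>{a}. image_mset sigma m = m'}. pmono R r a m)"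
    using r by (intro prename_superset[where V = "set_mset a"] pmono_closed) (auto simp: pmono_def)
  also have "\<dots> = pmono R r (image_mset sigma a) m'"
  proof (cases "image_mset sigma a = m'")
    case True
    hence "{m\<in>{a}. image_mset sigma m = m'} = {a}" by auto
    thus ?thesis using r True by (simp add: pmono_def)
  next
    case False
    hence "{m\<in>{a}. image_mset sigma m = m'} = {}" by auto
    thus ?thesis using not_sym[OF False] by (simp only:) (simp add: pmono_def)
  qed
  finally show "prename R sigma (pmono R r a) m' = pmono R r (image_mset sigma a) m'" .
qed

lemma prename_hom:
  assumes "sigma ` V \<subseteq> W"
  shows "prename R sigma \<in> ring_hom (poly_ring R V) (poly_ring R W)"
proof (rule poly_ring_hom_memI)
  show "ring (poly_ring R W)" using poly_ring_cring cring.axioms(1) by blast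
  show "prename R sigma (pmono R r a \<otimes>\<^bsub>poly_ring R V\<^esub> pmono R s b) =
      prename R sigma (pmono R r a) \<otimes>\<^bsub>poly_ring R W\<^esub> prename R sigma (pmono R s b)"
    if "r \<in> carrier R" "s \<in> carrier R" for r s a b
    using that by (simp add: pmono_mult prename_pmono)
  show "prename R sigma \<one>\<^bsub>poly_ring R V\<^esub> = \<one>\<^bsub>poly_ring R W\<^esub>"
    by (simp add: poly_ring_one prename_pmono)
qed (auto intro: prename_closed[OF _ assms] prename_add)

lemma prename_pvar: "prename R sigma (pvar R x) = pvar R (sigma x)"
  by (simp add: pvar_eq_pmono prename_pmono)

lemma prename_pconst: "r \<in> carrier R \<Longrightarrow> prename R sigma (pconst R r) = pconst R r"
  by (simp add: pconst_eq_pmono prename_pmono)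

lemma pconst_hom: "pconst R \<in> ring_hom R (poly_ring R V)"
proof (rule ring_hom_memI)
  fix x y assume "x \<in> carrier R" "y \<in> carrier R"
  thus "pconst R (x \<otimes> y) = pconst R x \<otimes>\<^bsub>poly_ring R V\<^esub> pconst R y"
    by (simp add: pconst_eq_pmono pmono_mult)
  show "pconst R (x \<oplus> y) = pconst R x \<oplus>\<^bsub>poly_ring R V\<^esub> pconst R y"
    by (auto simp: pconst_def poly_ring_add)
qed (simp_all add: pconst_closed[unfolded pconst_eq_pmono] poly_ring_one pconst_eq_pmono)

end

lemma ring_hom_minus:
  assumes "cring P" "cring S" "h \<in> ring_hom P S" "x \<in> carrier P" "y \<in> carrier P"
  shows "h (x \<ominus>\<^bsub>P\<^esub> y) = h x \<ominus>\<^bsub>S\<^esub> h y"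
proof -
  interpret h: ring_hom_cring P S h by (intro ring_hom_cring.intro ring_hom_cring_axioms.intro assms)
  show ?thesis using assms by simp
qed

lemma ring_hom_cong:
  assumes "f \<in> ring_hom R S" "\<And>x. x \<in> carrier R \<Longrightarrow> g x = f x" "ring R"
  shows "g \<in> ring_hom R S"
proof (rule ring_hom_memI)
  show "\<And>x. x \<in> carrier R \<Longrightarrow> g x \<in> carrier S" using assms by (simp add: ring_hom_closed)
  show "\<And>x y. x \<in> carrier R \<Longrightarrow> y \<in> carrier R \<Longrightarrow> g (x \<otimes>\<^bsub>R\<^esub> y) = g x \<otimes>\<^bsub>S\<^esub> g y"
    using assms by (simp add: ring_hom_mult ring.ring_simprules(5))
  show "\<And>x y. x \<in> carrier R \<Longrightarrow> y \<in> carrier R \<Longrightarrow> g (x \<oplus>\<^bsub>R\<^esub> y) = g x \<oplus>\<^bsub>S\<^esub> g y"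
    using assms by (simp add: ring_hom_add ring.ring_simprules(1))
  show "g \<one>\<^bsub>R\<^esub> = \<one>\<^bsub>S\<^esub>" using assms by (simp add: ring_hom_one ring.ring_simprules(6))
qed

lemma ring_hom_genideal_zero:
  assumes P: "ring P" and S: "ring S" and psi: "psi \<in> ring_hom P S" and "Gens \<subseteq> carrier P"
    and "\<And>x. x \<in> Gens \<Longrightarrow> psi x = \<zero>\<^bsub>S\<^esub>" and "x \<in> genideal P Gens"
  shows "psi x = \<zero>\<^bsub>S\<^esub>"
proof -
  interpret P: ring P by fact
  interpret S: ring S by fact
  interpret ring_hom_ring P S psi by (intro ring_hom_ringI2 P S psi)
  have "genideal P Gens \<subseteq> {r \<in> carrier P. psi r \<in> {\<zero>\<^bsub>S\<^esub>}}"
    using assms(4,5) by (intro P.genideal_minimal ideal_vimage S.zeroideal) auto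
  thus ?thesis using assms(6) by auto
qed

definition quot_lift :: "('p \<Rightarrow> 's) \<Rightarrow> 'p set \<Rightarrow> 's"
  where "quot_lift psi C = psi (SOME p. p \<in> C)"

context ideal
begin

lemma FactRing_carrier_rep:
  assumes "C \<in> carrier (R Quot I)"
  shows "(SOME p. p \<in> C) \<in> carrier R" and "C = I +> (SOME p. p \<in> C)"
proof -
  obtain p where p: "p \<in> carrier R" "C = I +> p"
    using assms unfolding FactRing_def A_RCOSETS_def' by auto
  hence "(SOME p. p \<in> C) \<in> C" using a_rcos_self by (metis someI)
  thus "(SOME p. p \<in> C) \<in> carrier R" and "C = I +> (SOME p. p \<in> C)"
    using p by (metis a_elemrcos_carrier, metis a_repr_independence')
qed

context
  fixes S psi
  assumes S: "ring S" and psi: "psi \<in> ring_hom R S" and vanish: "\<And>x. x \<in> I \<Longrightarrow> psi x = \<zero>\<^bsub>S\<^esub>"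
begin

lemma quot_lift_coset:
  assumes p: "p \<in> carrier R"
  shows "quot_lift psi (I +> p) = psi p"
proof -
  have "(SOME q. q \<in> I +> p) \<in> I +> p" using p a_rcos_self by (metis someI)
  then obtain k where k: "k \<in> I" "(SOME q. q \<in> I +> p) = k \<oplus> p"
    unfolding a_r_coset_def' by auto
  have "psi (k \<oplus> p) = psi p"
    using k p S psi vanish a_Hcarr by (simp add: ring_hom_add ring_hom_closed ring.ring_simprules(8))
  thus ?thesis unfolding quot_lift_def using k by simp
qed

lemma quot_lift_hom: "quot_lift psi \<in> ring_hom (R Quot I) S"
proof -
  have rcos: "(+>) I \<in> ring_hom R (R Quot I)" by (rule rcos_ring_hom)
  show ?thesis
  proof (rule ring_hom_memI)
    fix C assume "C \<in> carrier (R Quot I)"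
    thus "quot_lift psi C \<in> carrier S"
      using FactRing_carrier_rep quot_lift_coset psi by (metis ring_hom_closed)
  next
    fix C D assume "C \<in> carrier (R Quot I)" "D \<in> carrier (R Quot I)"
    then obtain p q where p: "p \<in> carrier R" "C = I +> p" and q: "q \<in> carrier R" "D = I +> q"
      using FactRing_carrier_rep by metis
    have "C \<otimes>\<^bsub>R Quot I\<^esub> D = I +> (p \<otimes> q)" "C \<oplus>\<^bsub>R Quot I\<^esub> D = I +> (p \<oplus> q)"
      using p q ring_hom_mult[OF rcos] ring_hom_add[OF rcos] by simp_all
    thus "quot_lift psi (C \<otimes>\<^bsub>R Quot I\<^esub> D) = quot_lift psi C \<otimes>\<^bsub>S\<^esub> quot_lift psi D"
      and "quot_lift psi (C \<oplus>\<^bsub>R Quot I\<^esub> D) = quot_lift psi C \<oplus>\<^bsub>S\<^esub> quot_lift psi D"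
      using p q psi by (simp_all add: quot_lift_coset ring_hom_mult ring_hom_add)
  next
    show "quot_lift psi \<one>\<^bsub>R Quot I\<^esub> = \<one>\<^bsub>S\<^esub>"
      using psi by (simp add: FactRing_def quot_lift_coset ring_hom_one)
  qed
qed

end

end

section \<open>Tensor products of commutative algebras\<close>

locale comm_algebra = R: cring R + A: cring A
  for R :: "('r, 'm) ring_scheme" and A :: "('a, 'n) ring_scheme" +
  fixes eta :: "'r \<Rightarrow> 'a"
  assumes eta_hom: "eta \<in> ring_hom R A"
begin

lemma tensor_rels_cases:
  assumes "x \<in> tensor_rels R A eta I"
  obtains i a b where "i \<in> I" "a \<in> carrier A" "b \<in> carrier A"
      "x = pvar R (i, a \<oplus>\<^bsub>A\<^esub> b) \<ominus>\<^bsub>poly_ring R (I \<times> carrier A)\<^esub>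
           (pvar R (i, a) \<oplus>\<^bsub>poly_ring R (I \<times> carrier A)\<^esub> pvar R (i, b))"
  | i a b where "i \<in> I" "a \<in> carrier A" "b \<in> carrier A"
      "x = pvar R (i, a \<otimes>\<^bsub>A\<^esub> b) \<ominus>\<^bsub>poly_ring R (I \<times> carrier A)\<^esub>
           (pvar R (i, a) \<otimes>\<^bsub>poly_ring R (I \<times> carrier A)\<^esub> pvar R (i, b))"
  | i where "i \<in> I"
      "x = pvar R (i, \<one>\<^bsub>A\<^esub>) \<ominus>\<^bsub>poly_ring R (I \<times> carrier A)\<^esub> \<one>\<^bsub>poly_ring R (I \<times> carrier A)\<^esub>"
  | i r where "i \<in> I" "r \<in> carrier R"
      "x = pvar R (i, eta r) \<ominus>\<^bsub>poly_ring R (I \<times> carrier A)\<^esub> pconst R r"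
  using assms unfolding tensor_rels_def Let_def by blast

lemma tensor_rels_closed: "tensor_rels R A eta I \<subseteq> carrier (poly_ring R (I \<times> carrier A))"
proof
  interpret P: cring "poly_ring R (I \<times> carrier A)" by (rule R.poly_ring_cring)
  fix x assume "x \<in> tensor_rels R A eta I"
  thus "x \<in> carrier (poly_ring R (I \<times> carrier A))"
    by (cases rule: tensor_rels_cases)
       (auto intro!: R.pvar_closed R.pconst_closed ring_hom_closed[OF eta_hom])
qed

lemma tensor_ideal_is_ideal: "ideal (tensor_ideal R A eta I) (poly_ring R (I \<times> carrier A))"
  unfolding tensor_ideal_def
  by (rule ring.genideal_ideal[OF cring.axioms(1)[OF R.poly_ring_cring] tensor_rels_closed])

lemma tensor_rels_in_ideal: "tensor_rels R A eta I \<subseteq> tensor_ideal R A eta I"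
  unfolding tensor_ideal_def
  by (rule ring.genideal_self[OF cring.axioms(1)[OF R.poly_ring_cring] tensor_rels_closed])

lemma tensor_cring: "cring (tensor R A eta I)"
  unfolding tensor_def by (rule ideal.quotient_is_cring[OF tensor_ideal_is_ideal R.poly_ring_cring])

lemma tensor_coset_hom:
  "(+>\<^bsub>poly_ring R (I \<times> carrier A)\<^esub>) (tensor_ideal R A eta I)
     \<in> ring_hom (poly_ring R (I \<times> carrier A)) (tensor R A eta I)"
  unfolding tensor_def by (rule ideal.rcos_ring_hom[OF tensor_ideal_is_ideal])

lemma tensor_coset_eqI:
  assumes "x \<in> carrier (poly_ring R (I \<times> carrier A))" "y \<in> carrier (poly_ring R (I \<times> carrier A))"
    and "x \<ominus>\<^bsub>poly_ring R (I \<times> carrier A)\<^esub> y \<in> tensor_rels R A eta I"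
  shows "tensor_ideal R A eta I +>\<^bsub>poly_ring R (I \<times> carrier A)\<^esub> x =
    tensor_ideal R A eta I +>\<^bsub>poly_ring R (I \<times> carrier A)\<^esub> y"
  using ring.quotient_eq_iff_same_a_r_cos[OF cring.axioms(1)[OF R.poly_ring_cring]
      tensor_ideal_is_ideal assms(1,2)] tensor_rels_in_ideal assms(3)
  by blast

lemma tunit_hom: "tunit R A eta I \<in> ring_hom R (tensor R A eta I)"
proof -
  have "tunit R A eta I = (+>\<^bsub>poly_ring R (I \<times> carrier A)\<^esub>) (tensor_ideal R A eta I) \<circ> pconst R"
    by (simp add: tunit_def fun_eq_iff)
  thus ?thesis using ring_hom_trans[OF R.pconst_hom tensor_coset_hom] by simp
qed

lemma tunit_closed: "r \<in> carrier R \<Longrightarrow> tunit R A eta I r \<in> carrier (tensor R A eta I)"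
  by (rule ring_hom_closed[OF tunit_hom])

lemma tgen_hom:
  assumes i: "i \<in> I"
  shows "tgen R A eta I i \<in> ring_hom A (tensor R A eta I)"
proof -
  let ?P = "poly_ring R (I \<times> carrier A)" and ?J = "tensor_ideal R A eta I"
  interpret P: cring ?P by (rule R.poly_ring_cring)
  have var: "pvar R (i, a) \<in> carrier ?P" if "a \<in> carrier A" for a
    using i that by (auto intro: R.pvar_closed)
  show ?thesis
  proof (rule ring_hom_memI)
    fix a b assume ab: "a \<in> carrier A" "b \<in> carrier A"
    have "?J +>\<^bsub>?P\<^esub> pvar R (i, a \<otimes>\<^bsub>A\<^esub> b) = ?J +>\<^bsub>?P\<^esub> (pvar R (i, a) \<otimes>\<^bsub>?P\<^esub> pvar R (i, b))"
      using ab i var by (intro tensor_coset_eqI P.m_closed) (auto simp: tensor_rels_def Let_def)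
    moreover have "?J +>\<^bsub>?P\<^esub> pvar R (i, a \<oplus>\<^bsub>A\<^esub> b) = ?J +>\<^bsub>?P\<^esub> (pvar R (i, a) \<oplus>\<^bsub>?P\<^esub> pvar R (i, b))"
      using ab i var by (intro tensor_coset_eqI P.a_closed) (auto simp: tensor_rels_def Let_def)
    ultimately
    show "tgen R A eta I i (a \<otimes>\<^bsub>A\<^esub> b) = tgen R A eta I i a \<otimes>\<^bsub>tensor R A eta I\<^esub> tgen R A eta I i b"
      and "tgen R A eta I i (a \<oplus>\<^bsub>A\<^esub> b) = tgen R A eta I i a \<oplus>\<^bsub>tensor R A eta I\<^esub> tgen R A eta I i b"
      unfolding tgen_def using ab
      by (simp_all add: ring_hom_mult[OF tensor_coset_hom] ring_hom_add[OF tensor_coset_hom] var)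
  next
    have "?J +>\<^bsub>?P\<^esub> pvar R (i, \<one>\<^bsub>A\<^esub>) = ?J +>\<^bsub>?P\<^esub> \<one>\<^bsub>?P\<^esub>"
      using i var by (intro tensor_coset_eqI) (auto simp: tensor_rels_def Let_def)
    thus "tgen R A eta I i \<one>\<^bsub>A\<^esub> = \<one>\<^bsub>tensor R A eta I\<^esub>"
      unfolding tgen_def using ring_hom_one[OF tensor_coset_hom] by simp
  qed (simp add: tgen_def var ring_hom_closed[OF tensor_coset_hom])
qed

lemma tgen_closed: "i \<in> I \<Longrightarrow> a \<in> carrier A \<Longrightarrow> tgen R A eta I i a \<in> carrier (tensor R A eta I)"
  by (rule ring_hom_closed[OF tgen_hom])

lemma tgen_eta:
  assumes "i \<in> I" "r \<in> carrier R"
  shows "tgen R A eta I i (eta r) = tunit R A eta I r"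
  unfolding tgen_def tunit_def
  using assms ring_hom_closed[OF eta_hom]
  by (intro tensor_coset_eqI) (auto simp: tensor_rels_def Let_def R.pconst_closed R.pvar_closed)

lemma tensor_comm_algebra: "comm_algebra R (tensor R A eta I) (tunit R A eta I)"
  by (intro comm_algebra.intro comm_algebra_axioms.intro R.is_cring tensor_cring tunit_hom)

lemma tensor_hom_eqI:
  assumes S: "ring S"
    and f: "f \<in> ring_hom (tensor R A eta I) S" and g: "g \<in> ring_hom (tensor R A eta I) S"
    and tgen: "\<And>i a. i \<in> I \<Longrightarrow> a \<in> carrier A \<Longrightarrow> f (tgen R A eta I i a) = g (tgen R A eta I i a)"
    and tunit: "\<And>r. r \<in> carrier R \<Longrightarrow> f (tunit R A eta I r) = g (tunit R A eta I r)"
    and x: "x \<in> carrier (tensor R A eta I)"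
  shows "f x = g x"
proof -
  let ?P = "poly_ring R (I \<times> carrier A)" and ?J = "tensor_ideal R A eta I"
  have "(f \<circ> (+>\<^bsub>?P\<^esub>) ?J) p = (g \<circ> (+>\<^bsub>?P\<^esub>) ?J) p" if p: "p \<in> carrier ?P" for p
  proof (rule R.poly_ring_hom_eqI[OF S _ _ _ _ p])
    show "f \<circ> (+>\<^bsub>?P\<^esub>) ?J \<in> ring_hom ?P S" "g \<circ> (+>\<^bsub>?P\<^esub>) ?J \<in> ring_hom ?P S"
      by (rule ring_hom_trans[OF tensor_coset_hom f], rule ring_hom_trans[OF tensor_coset_hom g])
    show "(f \<circ> (+>\<^bsub>?P\<^esub>) ?J) (pvar R y) = (g \<circ> (+>\<^bsub>?P\<^esub>) ?J) (pvar R y)"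
      if "y \<in> I \<times> carrier A" for y
      using that tgen by (auto simp: tgen_def)
    show "(f \<circ> (+>\<^bsub>?P\<^esub>) ?J) (pconst R r) = (g \<circ> (+>\<^bsub>?P\<^esub>) ?J) (pconst R r)"
      if "r \<in> carrier R" for r
      using that tunit by (simp add: tunit_def)
  qed
  thus ?thesis
    using ideal.FactRing_carrier_rep[OF tensor_ideal_is_ideal x[unfolded tensor_def]] by (metis comp_apply)
qed

end

definition tensor_lift :: "('r, 'm) ring_scheme \<Rightarrow> ('s, 'n) ring_scheme \<Rightarrow> ('r \<Rightarrow> 's)
    \<Rightarrow> ('i \<Rightarrow> 'a \<Rightarrow> 's) \<Rightarrow> (('i \<times> 'a) multiset \<Rightarrow> 'r) set \<Rightarrow> 's"
  where "tensor_lift R S c v = quot_lift (poly_eval R S c (\<lambda>(i, a). v i a))"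

context comm_algebra
begin

context
  fixes S :: "('s, 'k) ring_scheme" and c :: "'r \<Rightarrow> 's" and v :: "'i \<Rightarrow> 'a \<Rightarrow> 's" and I :: "'i set"
  assumes S: "cring S" and c: "c \<in> ring_hom R S" and v: "\<And>i. i \<in> I \<Longrightarrow> v i \<in> ring_hom A S"
    and v_eta: "\<And>i r. i \<in> I \<Longrightarrow> r \<in> carrier R \<Longrightarrow> v i (eta r) = c r"
begin

interpretation S: cring S by (rule S)

abbreviation (input) "symbol_eval \<equiv> poly_eval R S c (\<lambda>(i, a). v i a)"

lemma symbol_eval_hom: "symbol_eval \<in> ring_hom (poly_ring R (I \<times> carrier A)) S"
  by (rule R.poly_eval_hom[OF S c]) (auto intro: ring_hom_closed[OF v])

lemma symbol_eval_pvar: "i \<in> I \<Longrightarrow> a \<in> carrier A \<Longrightarrow> symbol_eval (pvar R (i, a)) = v i a"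
  by (subst R.poly_eval_pvar[OF S c, where V = "I \<times> carrier A"]) (auto intro: ring_hom_closed[OF v])

lemma symbol_eval_pconst: "r \<in> carrier R \<Longrightarrow> symbol_eval (pconst R r) = c r"
  by (rule R.poly_eval_pconst[OF S c, where V = "I \<times> carrier A"]) (auto intro: ring_hom_closed[OF v])

lemma symbol_eval_tensor_ideal:
  assumes "x \<in> tensor_ideal R A eta I"
  shows "symbol_eval x = \<zero>\<^bsub>S\<^esub>"
  unfolding tensor_ideal_def
proof (rule ring_hom_genideal_zero[OF cring.axioms(1)[OF R.poly_ring_cring] S.ring_axioms symbol_eval_hom
      tensor_rels_closed _ assms[unfolded tensor_ideal_def]])
  interpret P: cring "poly_ring R (I \<times> carrier A)" by (rule R.poly_ring_cring)
  note minus = ring_hom_minus[OF P.is_cring S symbol_eval_hom]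
  have closed: "pvar R (i, a) \<in> carrier (poly_ring R (I \<times> carrier A))" "v i a \<in> carrier S"
    if "i \<in> I" "a \<in> carrier A" for i a
    using that v by (auto intro: R.pvar_closed ring_hom_closed)
  fix x assume "x \<in> tensor_rels R A eta I"
  thus "symbol_eval x = \<zero>\<^bsub>S\<^esub>"
  proof (cases rule: tensor_rels_cases)
    case (1 i a b)
    thus ?thesis using closed v
      by (simp add: minus ring_hom_add[OF symbol_eval_hom] symbol_eval_pvar ring_hom_add[OF v])
  next
    case (2 i a b)
    thus ?thesis using closed v
      by (simp add: minus ring_hom_mult[OF symbol_eval_hom] symbol_eval_pvar ring_hom_mult[OF v])
  next
    case (3 i)
    thus ?thesis using closed v
      by (simp add: minus ring_hom_one[OF symbol_eval_hom] symbol_eval_pvar ring_hom_one[OF v])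
  next
    case (4 i r)
    thus ?thesis
      using closed[of i "eta r"] ring_hom_closed[OF eta_hom] R.pconst_closed[of r "I \<times> carrier A"]
        ring_hom_closed[OF c]
      by (simp add: minus symbol_eval_pvar symbol_eval_pconst v_eta)
  qed
qed

lemma tensor_lift_hom: "tensor_lift R S c v \<in> ring_hom (tensor R A eta I) S"
  unfolding tensor_lift_def tensor_def
  by (rule ideal.quot_lift_hom[OF tensor_ideal_is_ideal S.ring_axioms symbol_eval_hom
        symbol_eval_tensor_ideal])

lemma tensor_lift_coset:
  "p \<in> carrier (poly_ring R (I \<times> carrier A)) \<Longrightarrow>
    tensor_lift R S c v (tensor_ideal R A eta I +>\<^bsub>poly_ring R (I \<times> carrier A)\<^esub> p) = symbol_eval p"
  unfolding tensor_lift_def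
  by (rule ideal.quot_lift_coset[OF tensor_ideal_is_ideal S.ring_axioms symbol_eval_hom
        symbol_eval_tensor_ideal])

lemma tensor_lift_tgen:
  "i \<in> I \<Longrightarrow> a \<in> carrier A \<Longrightarrow> tensor_lift R S c v (tgen R A eta I i a) = v i a"
  by (simp add: tgen_def tensor_lift_coset R.pvar_closed symbol_eval_pvar)

lemma tensor_lift_tunit: "r \<in> carrier R \<Longrightarrow> tensor_lift R S c v (tunit R A eta I r) = c r"
  by (simp add: tunit_def tensor_lift_coset R.pconst_closed symbol_eval_pconst)

end

context
  fixes A' :: "('b, 'k) ring_scheme" and eta' :: "'r \<Rightarrow> 'b" and I :: "'i set" and J :: "'j set"
    and j :: "'i \<Rightarrow> 'j" and h :: "'i \<Rightarrow> 'a \<Rightarrow> 'b" and sigma :: "'i \<times> 'a \<Rightarrow> 'j \<times> 'b"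
  assumes A': "comm_algebra R A' eta'" and j: "\<And>i. i \<in> I \<Longrightarrow> j i \<in> J"
    and h: "\<And>i. i \<in> I \<Longrightarrow> h i \<in> ring_hom A A'"
    and h_eta: "\<And>i r. i \<in> I \<Longrightarrow> r \<in> carrier R \<Longrightarrow> h i (eta r) = eta' r"
    and sigma: "\<And>i a. i \<in> I \<Longrightarrow> a \<in> carrier A \<Longrightarrow> sigma (i, a) = (j i, h i a)"
begin

interpretation A': comm_algebra R A' eta' by (rule A')

abbreviation (input) "tmap_lift \<equiv>
  tensor_lift R (tensor R A' eta' J) (tunit R A' eta' J) (\<lambda>i. tgen R A' eta' J (j i) \<circ> h i)"

lemma tmap_lift_props:
  shows "tmap_lift \<in> ring_hom (tensor R A eta I) (tensor R A' eta' J)"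
    and "i \<in> I \<Longrightarrow> a \<in> carrier A \<Longrightarrow> tmap_lift (tgen R A eta I i a) = tgen R A' eta' J (j i) (h i a)"
    and "r \<in> carrier R \<Longrightarrow> tmap_lift (tunit R A eta I r) = tunit R A' eta' J r"
proof -
  have v: "\<And>i. i \<in> I \<Longrightarrow> tgen R A' eta' J (j i) \<circ> h i \<in> ring_hom A (tensor R A' eta' J)"
    using ring_hom_trans[OF h A'.tgen_hom[OF j]] .
  have v_eta: "\<And>i r. i \<in> I \<Longrightarrow> r \<in> carrier R \<Longrightarrow> (tgen R A' eta' J (j i) \<circ> h i) (eta r) = tunit R A' eta' J r"
    using h_eta A'.tgen_eta[OF j] by simp
  note lift = A'.tensor_cring A'.tunit_hom v v_eta
  show "tmap_lift \<in> ring_hom (tensor R A eta I) (tensor R A' eta' J)"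
    by (rule tensor_lift_hom[OF lift])
  show "i \<in> I \<Longrightarrow> a \<in> carrier A \<Longrightarrow> tmap_lift (tgen R A eta I i a) = tgen R A' eta' J (j i) (h i a)"
    by (simp add: tensor_lift_tgen[OF lift])
  show "r \<in> carrier R \<Longrightarrow> tmap_lift (tunit R A eta I r) = tunit R A' eta' J r"
    by (rule tensor_lift_tunit[OF lift])
qed

text \<open>\<open>tmap\<close> renames the variables of an arbitrary representative of a coset; it is well
  defined because it agrees with the map given by the universal property.\<close>

lemma tmap_eq_tmap_lift:
  assumes x: "x \<in> carrier (tensor R A eta I)"
  shows "tmap R A' eta' J sigma x = tmap_lift x"
proof -
  let ?P = "poly_ring R (I \<times> carrier A)" and ?P' = "poly_ring R (J \<times> carrier A')"
  let ?coset = "(+>\<^bsub>?P'\<^esub>) (tensor_ideal R A' eta' J)"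
  let ?w = "\<lambda>(i, a). (tgen R A' eta' J (j i) \<circ> h i) a"
  let ?eval = "poly_eval R (tensor R A' eta' J) (tunit R A' eta' J) ?w"
  have w: "?w y \<in> carrier (tensor R A' eta' J)" if "y \<in> I \<times> carrier A" for y
    using that j h by (auto intro: A'.tgen_closed ring_hom_closed)
  have "sigma ` (I \<times> carrier A) \<subseteq> J \<times> carrier A'"
    using sigma j ring_hom_closed[OF h] by auto
  hence rename: "?coset \<circ> prename R sigma \<in> ring_hom ?P (tensor R A' eta' J)"
    by (rule ring_hom_trans[OF R.prename_hom A'.tensor_coset_hom])
  have eval: "?eval \<in> ring_hom ?P (tensor R A' eta' J)"
    by (rule R.poly_eval_hom[OF A'.tensor_cring A'.tunit_hom w])
  have "(?coset \<circ> prename R sigma) p = ?eval p" if p: "p \<in> carrier ?P" for p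
  proof (rule R.poly_ring_hom_eqI[OF cring.axioms(1)[OF A'.tensor_cring] rename eval _ _ p])
    show "(?coset \<circ> prename R sigma) (pvar R y) = ?eval (pvar R y)" if "y \<in> I \<times> carrier A" for y
      using that sigma R.poly_eval_pvar[OF A'.tensor_cring A'.tunit_hom w that]
      by (auto simp: R.prename_pvar tgen_def)
    show "(?coset \<circ> prename R sigma) (pconst R r) = ?eval (pconst R r)" if "r \<in> carrier R" for r
      using R.poly_eval_pconst[OF A'.tensor_cring A'.tunit_hom, where V = "I \<times> carrier A", OF w that]
      by (simp add: R.prename_pconst that tunit_def)
  qed
  moreover have "(SOME p. p \<in> x) \<in> carrier ?P"
    using ideal.FactRing_carrier_rep(1)[OF tensor_ideal_is_ideal x[unfolded tensor_def]] .
  ultimately show ?thesis by (simp add: tmap_def tensor_lift_def quot_lift_def)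
qed

lemma tmap_hom: "tmap R A' eta' J sigma \<in> ring_hom (tensor R A eta I) (tensor R A' eta' J)"
  by (rule ring_hom_cong[OF tmap_lift_props(1) tmap_eq_tmap_lift cring.axioms(1)[OF tensor_cring]])

lemma tmap_tgen:
  "i \<in> I \<Longrightarrow> a \<in> carrier A \<Longrightarrow> tmap R A' eta' J sigma (tgen R A eta I i a) = tgen R A' eta' J (j i) (h i a)"
  by (simp add: tmap_eq_tmap_lift tgen_closed tmap_lift_props(2))

lemma tmap_tunit: "r \<in> carrier R \<Longrightarrow> tmap R A' eta' J sigma (tunit R A eta I r) = tunit R A' eta' J r"
  by (simp add: tmap_eq_tmap_lift tunit_closed tmap_lift_props(3))

end

context
  fixes I :: "'i set" and J :: "'j set" and d :: "'i \<Rightarrow> 'j"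
  assumes d: "\<And>i. i \<in> I \<Longrightarrow> d i \<in> J"
begin

lemma tensor_reindex_hom:
  "tmap R A eta J (\<lambda>(i, a). (d i, a)) \<in> ring_hom (tensor R A eta I) (tensor R A eta J)"
  by (rule tmap_hom[OF comm_algebra_axioms d id_ring_hom]) simp_all

lemma tensor_reindex_tgen:
  "i \<in> I \<Longrightarrow> a \<in> carrier A \<Longrightarrow> tmap R A eta J (\<lambda>(i, a). (d i, a)) (tgen R A eta I i a) = tgen R A eta J (d i) a"
  using tmap_tgen[OF comm_algebra_axioms, where I = I and J = J and j = d and h = "\<lambda>_. id"] d by simp

lemma tensor_reindex_tunit:
  "r \<in> carrier R \<Longrightarrow> tmap R A eta J (\<lambda>(i, a). (d i, a)) (tunit R A eta I r) = tunit R A eta J r"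
  by (rule tmap_tunit[OF comm_algebra_axioms d id_ring_hom]) simp_all

end

end

section \<open>Regrouping the factors of a tensor product over a product set\<close>

definition regroup :: "('r, 'm) ring_scheme \<Rightarrow> ('a, 'n) ring_scheme \<Rightarrow> ('r \<Rightarrow> 'a) \<Rightarrow> 'i set \<Rightarrow> 'j set
    \<Rightarrow> ((('i \<times> 'j) \<times> 'a) multiset \<Rightarrow> 'r) set \<Rightarrow> (('j \<times> (('i \<times> 'a) multiset \<Rightarrow> 'r) set) multiset \<Rightarrow> 'r) set"
  where "regroup R A eta I J =
    tmap R (tensor R A eta I) (tunit R A eta I) J (\<lambda>((i, j), a). (j, tgen R A eta I i a))"

definition ungroup :: "('r, 'm) ring_scheme \<Rightarrow> ('a, 'n) ring_scheme \<Rightarrow> ('r \<Rightarrow> 'a) \<Rightarrow> 'i set \<Rightarrow> 'j set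
    \<Rightarrow> (('j \<times> (('i \<times> 'a) multiset \<Rightarrow> 'r) set) multiset \<Rightarrow> 'r) set \<Rightarrow> ((('i \<times> 'j) \<times> 'a) multiset \<Rightarrow> 'r) set"
  where "ungroup R A eta I J = tensor_lift R (tensor R A eta (I \<times> J)) (tunit R A eta (I \<times> J))
    (\<lambda>j. tmap R A eta (I \<times> J) (\<lambda>(i, a). ((i, j), a)))"

context comm_algebra
begin

context
  fixes I :: "'i set" and J :: "'j set"
begin

interpretation T: comm_algebra R "tensor R A eta I" "tunit R A eta I"
  by (rule tensor_comm_algebra)

lemma regroup_hom:
  "regroup R A eta I J \<in> ring_hom (tensor R A eta (I \<times> J)) (tensor R (tensor R A eta I) (tunit R A eta I) J)"
  unfolding regroup_def
  by (rule tmap_hom[OF tensor_comm_algebra, where j = snd and h = "\<lambda>p. tgen R A eta I (fst p)"])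
     (auto intro: tgen_hom simp: tgen_eta)

lemma regroup_tgen:
  assumes "i \<in> I" "j \<in> J" "a \<in> carrier A"
  shows "regroup R A eta I J (tgen R A eta (I \<times> J) (i, j) a) =
    tgen R (tensor R A eta I) (tunit R A eta I) J j (tgen R A eta I i a)"
  unfolding regroup_def using assms
  by (subst tmap_tgen[OF tensor_comm_algebra, where j = snd and h = "\<lambda>p. tgen R A eta I (fst p)"])
     (auto intro: tgen_hom simp: tgen_eta)

lemma regroup_tunit:
  "r \<in> carrier R \<Longrightarrow> regroup R A eta I J (tunit R A eta (I \<times> J) r) =
    tunit R (tensor R A eta I) (tunit R A eta I) J r"
  unfolding regroup_def
  by (rule tmap_tunit[OF tensor_comm_algebra, where j = snd and h = "\<lambda>p. tgen R A eta I (fst p)"])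
     (auto intro: tgen_hom simp: tgen_eta)

lemma ungroup_props:
  shows "ungroup R A eta I J \<in> ring_hom (tensor R (tensor R A eta I) (tunit R A eta I) J) (tensor R A eta (I \<times> J))"
    and "j \<in> J \<Longrightarrow> c \<in> carrier (tensor R A eta I) \<Longrightarrow>
      ungroup R A eta I J (tgen R (tensor R A eta I) (tunit R A eta I) J j c) =
      tmap R A eta (I \<times> J) (\<lambda>(i, a). ((i, j), a)) c"
    and "r \<in> carrier R \<Longrightarrow>
      ungroup R A eta I J (tunit R (tensor R A eta I) (tunit R A eta I) J r) = tunit R A eta (I \<times> J) r"
proof -
  note lift = T.tensor_lift_hom T.tensor_lift_tgen T.tensor_lift_tunit
  note fibre = tensor_reindex_hom tensor_reindex_tunit
  have v: "\<And>j. j \<in> J \<Longrightarrow> tmap R A eta (I \<times> J) (\<lambda>(i, a). ((i, j), a)) \<in> ring_hom (tensor R A eta I) (tensor R A eta (I \<times> J))"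
    and v_eta: "\<And>j r. j \<in> J \<Longrightarrow> r \<in> carrier R \<Longrightarrow> tmap R A eta (I \<times> J) (\<lambda>(i, a). ((i, j), a)) (tunit R A eta I r) = tunit R A eta (I \<times> J) r"
    by (auto intro!: tensor_reindex_hom tensor_reindex_tunit)
  note hyps = tensor_cring tunit_hom v v_eta
  show "ungroup R A eta I J \<in> ring_hom (tensor R (tensor R A eta I) (tunit R A eta I) J) (tensor R A eta (I \<times> J))"
    unfolding ungroup_def by (rule T.tensor_lift_hom[OF hyps])
  show "j \<in> J \<Longrightarrow> c \<in> carrier (tensor R A eta I) \<Longrightarrow>
      ungroup R A eta I J (tgen R (tensor R A eta I) (tunit R A eta I) J j c) =
      tmap R A eta (I \<times> J) (\<lambda>(i, a). ((i, j), a)) c"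
    unfolding ungroup_def by (rule T.tensor_lift_tgen[OF hyps])
  show "r \<in> carrier R \<Longrightarrow>
      ungroup R A eta I J (tunit R (tensor R A eta I) (tunit R A eta I) J r) = tunit R A eta (I \<times> J) r"
    unfolding ungroup_def by (rule T.tensor_lift_tunit[OF hyps])
qed

lemma ungroup_regroup:
  assumes x: "x \<in> carrier (tensor R A eta (I \<times> J))"
  shows "ungroup R A eta I J (regroup R A eta I J x) = x"
proof -
  have "(ungroup R A eta I J \<circ> regroup R A eta I J) x = id x"
  proof (rule tensor_hom_eqI[OF cring.axioms(1)[OF tensor_cring] _ id_ring_hom _ _ x])
    show "ungroup R A eta I J \<circ> regroup R A eta I J \<in> ring_hom (tensor R A eta (I \<times> J)) (tensor R A eta (I \<times> J))"
      by (rule ring_hom_trans[OF regroup_hom ungroup_props(1)])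
    show "(ungroup R A eta I J \<circ> regroup R A eta I J) (tgen R A eta (I \<times> J) p a) = id (tgen R A eta (I \<times> J) p a)"
      if "p \<in> I \<times> J" "a \<in> carrier A" for p a
      using that
      by (auto simp: regroup_tgen ungroup_props(2) tgen_closed tensor_reindex_tgen[where J = "I \<times> J"])
    show "(ungroup R A eta I J \<circ> regroup R A eta I J) (tunit R A eta (I \<times> J) r) = id (tunit R A eta (I \<times> J) r)"
      if "r \<in> carrier R" for r
      using that by (simp add: regroup_tunit ungroup_props(3))
  qed
  thus ?thesis by simp
qed

lemma regroup_fibre:
  assumes j: "j \<in> J" and c: "c \<in> carrier (tensor R A eta I)"
  shows "regroup R A eta I J (tmap R A eta (I \<times> J) (\<lambda>(i, a). ((i, j), a)) c) =
    tgen R (tensor R A eta I) (tunit R A eta I) J j c"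
proof -
  let ?fibre = "tmap R A eta (I \<times> J) (\<lambda>(i, a). ((i, j), a))"
  have "(regroup R A eta I J \<circ> ?fibre) c = tgen R (tensor R A eta I) (tunit R A eta I) J j c"
  proof (rule tensor_hom_eqI[OF cring.axioms(1)[OF T.tensor_cring] _ T.tgen_hom[OF j] _ _ c])
    show "regroup R A eta I J \<circ> ?fibre \<in> ring_hom (tensor R A eta I) (tensor R (tensor R A eta I) (tunit R A eta I) J)"
      using j by (intro ring_hom_trans[OF tensor_reindex_hom regroup_hom]) auto
    show "(regroup R A eta I J \<circ> ?fibre) (tgen R A eta I i a) = tgen R (tensor R A eta I) (tunit R A eta I) J j (tgen R A eta I i a)"
      if "i \<in> I" "a \<in> carrier A" for i a
      using that j by (simp add: tensor_reindex_tgen[where J = "I \<times> J"] regroup_tgen)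
    show "(regroup R A eta I J \<circ> ?fibre) (tunit R A eta I r) = tgen R (tensor R A eta I) (tunit R A eta I) J j (tunit R A eta I r)"
      if "r \<in> carrier R" for r
      using that j by (simp add: tensor_reindex_tunit[where J = "I \<times> J"] regroup_tunit T.tgen_eta)
  qed
  thus ?thesis by simp
qed

lemma regroup_ungroup:
  assumes y: "y \<in> carrier (tensor R (tensor R A eta I) (tunit R A eta I) J)"
  shows "regroup R A eta I J (ungroup R A eta I J y) = y"
proof -
  have "(regroup R A eta I J \<circ> ungroup R A eta I J) y = id y"
  proof (rule T.tensor_hom_eqI[OF cring.axioms(1)[OF T.tensor_cring] _ id_ring_hom _ _ y])
    show "regroup R A eta I J \<circ> ungroup R A eta I J \<in>
        ring_hom (tensor R (tensor R A eta I) (tunit R A eta I) J) (tensor R (tensor R A eta I) (tunit R A eta I) J)"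
      by (rule ring_hom_trans[OF ungroup_props(1) regroup_hom])
    show "(regroup R A eta I J \<circ> ungroup R A eta I J) (tgen R (tensor R A eta I) (tunit R A eta I) J j c) =
        id (tgen R (tensor R A eta I) (tunit R A eta I) J j c)"
      if "j \<in> J" "c \<in> carrier (tensor R A eta I)" for j c
      using that by (simp add: ungroup_props(2) regroup_fibre)
    show "(regroup R A eta I J \<circ> ungroup R A eta I J) (tunit R (tensor R A eta I) (tunit R A eta I) J r) =
        id (tunit R (tensor R A eta I) (tunit R A eta I) J r)"
      if "r \<in> carrier R" for r
      using that by (simp add: ungroup_props(3) regroup_tunit)
  qed
  thus ?thesis by simp
qed

theorem regroup_iso:
  "regroup R A eta I J \<in> ring_iso (tensor R A eta (I \<times> J)) (tensor R (tensor R A eta I) (tunit R A eta I) J)"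
proof -
  have "bij_betw (regroup R A eta I J) (carrier (tensor R A eta (I \<times> J)))
      (carrier (tensor R (tensor R A eta I) (tunit R A eta I) J))"
    by (rule bij_betw_byWitness[where f' = "ungroup R A eta I J"])
       (auto simp: ungroup_regroup regroup_ungroup
         intro: ring_hom_closed[OF regroup_hom] ring_hom_closed[OF ungroup_props(1)])
  thus ?thesis using regroup_hom by (simp add: ring_iso_def)
qed

end

lemma regroup_natural:
  assumes e: "\<And>i j. i \<in> I \<Longrightarrow> j \<in> J \<Longrightarrow> e (i, j) = (e\<^sub>1 i j, e\<^sub>2 j)"
    and e\<^sub>1: "\<And>i j. i \<in> I \<Longrightarrow> j \<in> J \<Longrightarrow> e\<^sub>1 i j \<in> I'" and e\<^sub>2: "\<And>j. j \<in> J \<Longrightarrow> e\<^sub>2 j \<in> J'"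
    and h: "\<And>j. j \<in> J \<Longrightarrow> h j \<in> ring_hom (tensor R A eta I) (tensor R A eta I')"
    and h_tunit: "\<And>j r. j \<in> J \<Longrightarrow> r \<in> carrier R \<Longrightarrow> h j (tunit R A eta I r) = tunit R A eta I' r"
    and h_tgen: "\<And>j i a. j \<in> J \<Longrightarrow> i \<in> I \<Longrightarrow> a \<in> carrier A \<Longrightarrow>
      h j (tgen R A eta I i a) = tgen R A eta I' (e\<^sub>1 i j) a"
    and x: "x \<in> carrier (tensor R A eta (I \<times> J))"
  shows "regroup R A eta I' J' (tmap R A eta (I' \<times> J') (\<lambda>(p, a). (e p, a)) x) =
    tmap R (tensor R A eta I') (tunit R A eta I') J' (\<lambda>(j, c). (e\<^sub>2 j, h j c)) (regroup R A eta I J x)"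
proof -
  interpret T: comm_algebra R "tensor R A eta I" "tunit R A eta I" by (rule tensor_comm_algebra)
  let ?E = "tmap R A eta (I' \<times> J') (\<lambda>(p, a). (e p, a))"
  let ?H = "tmap R (tensor R A eta I') (tunit R A eta I') J' (\<lambda>(j, c). (e\<^sub>2 j, h j c))"
  have e_closed: "\<And>p. p \<in> I \<times> J \<Longrightarrow> e p \<in> I' \<times> J'" using e e\<^sub>1 e\<^sub>2 by auto
  have H_hom: "?H \<in> ring_hom (tensor R (tensor R A eta I) (tunit R A eta I) J)
      (tensor R (tensor R A eta I') (tunit R A eta I') J')"
    by (rule T.tmap_hom[OF tensor_comm_algebra, where j = e\<^sub>2 and h = h]) (use e\<^sub>2 h h_tunit in auto)
  have H_tgen: "?H (tgen R (tensor R A eta I) (tunit R A eta I) J j c) =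
      tgen R (tensor R A eta I') (tunit R A eta I') J' (e\<^sub>2 j) (h j c)"
    if "j \<in> J" "c \<in> carrier (tensor R A eta I)" for j c
    by (rule T.tmap_tgen[OF tensor_comm_algebra, where j = e\<^sub>2 and h = h]) (use that e\<^sub>2 h h_tunit in auto)
  have H_tunit: "?H (tunit R (tensor R A eta I) (tunit R A eta I) J r) =
      tunit R (tensor R A eta I') (tunit R A eta I') J' r"
    if "r \<in> carrier R" for r
    by (rule T.tmap_tunit[OF tensor_comm_algebra, where j = e\<^sub>2 and h = h]) (use that e\<^sub>2 h h_tunit in auto)
  have "(regroup R A eta I' J' \<circ> ?E) x = (?H \<circ> regroup R A eta I J) x"
  proof (rule tensor_hom_eqI[OF cring.axioms(1)[OF comm_algebra.tensor_cring[OF tensor_comm_algebra]] _ _ _ _ x])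
    show "regroup R A eta I' J' \<circ> ?E \<in> ring_hom (tensor R A eta (I \<times> J))
        (tensor R (tensor R A eta I') (tunit R A eta I') J')"
      by (rule ring_hom_trans[OF tensor_reindex_hom[OF e_closed] regroup_hom])
    show "?H \<circ> regroup R A eta I J \<in> ring_hom (tensor R A eta (I \<times> J))
        (tensor R (tensor R A eta I') (tunit R A eta I') J')"
      by (rule ring_hom_trans[OF regroup_hom H_hom])
    show "(regroup R A eta I' J' \<circ> ?E) (tgen R A eta (I \<times> J) p a) =
        (?H \<circ> regroup R A eta I J) (tgen R A eta (I \<times> J) p a)"
      if p: "p \<in> I \<times> J" and a: "a \<in> carrier A" for p a
    proof -
      obtain i j where ij: "p = (i, j)" "i \<in> I" "j \<in> J" using p by auto
      have "(regroup R A eta I' J' \<circ> ?E) (tgen R A eta (I \<times> J) p a) =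
          tgen R (tensor R A eta I') (tunit R A eta I') J' (e\<^sub>2 j) (tgen R A eta I' (e\<^sub>1 i j) a)"
        using ij a e e\<^sub>1 e\<^sub>2 e_closed by (simp add: tensor_reindex_tgen regroup_tgen)
      also have "\<dots> = (?H \<circ> regroup R A eta I J) (tgen R A eta (I \<times> J) p a)"
        using ij a by (simp add: regroup_tgen tgen_closed H_tgen h_tgen)
      finally show ?thesis .
    qed
    show "(regroup R A eta I' J' \<circ> ?E) (tunit R A eta (I \<times> J) r) =
        (?H \<circ> regroup R A eta I J) (tunit R A eta (I \<times> J) r)"
      if "r \<in> carrier R" for r
      using that by (simp add: H_tunit tensor_reindex_tunit[OF e_closed] regroup_tunit)
  qed
  thus ?thesis by simp
qed

end

section \<open>Loday constructions of twisted Cartesian products\<close>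

lemma simp_set_face_closed: "simp_set Xs d s \<Longrightarrow> 0 < n \<Longrightarrow> i \<le> n \<Longrightarrow> x \<in> Xs n \<Longrightarrow> d n i x \<in> Xs (n - 1)"
  by (simp add: simp_set_def)

lemma simp_set_degen_closed: "simp_set Xs d s \<Longrightarrow> i \<le> n \<Longrightarrow> x \<in> Xs n \<Longrightarrow> s n i x \<in> Xs (Suc n)"
  by (simp add: simp_set_def)

lemma simp_action_closed:
  "simp_action G dG sG F dF sF act \<Longrightarrow> g \<in> carrier (G n) \<Longrightarrow> f \<in> F n \<Longrightarrow> act n g f \<in> F n"
  by (simp add: simp_action_def)

lemma twisting_function_closed:
  "twisting_function G dG sG B dB sB tau \<Longrightarrow> 0 < q \<Longrightarrow> b \<in> B q \<Longrightarrow> tau q b \<in> carrier (G (q - 1))"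
  by (simp add: twisting_function_def)

context comm_algebra
begin

lemma regroup_loday_face:
  assumes F: "simp_set F dF sF" and B: "simp_set B dB sB"
    and act: "simp_action G dG sG F dF sF act" and tau: "twisting_function G dG sG B dB sB tau"
    and n: "0 < n" "i \<le> n" and x: "x \<in> carrier (loday R A eta (tcp_set F B) n)"
  shows "regroup R A eta (F (n - 1)) (B (n - 1))
      (loday_face R A eta (tcp_set F B) (tcp_face act tau dF dB) n i x) =
    twloday_face R (loday R A eta F) (\<lambda>n. tunit R A eta (F n)) (loday_face R A eta F dF)
      (loday_act R A eta F act) B dB tau n i (regroup R A eta (F n) (B n) x)"
proof -
  have dF: "\<And>f. f \<in> F n \<Longrightarrow> dF n i f \<in> F (n - 1)"
    using simp_set_face_closed[OF F] n by blast
  have dB: "\<And>b. b \<in> B n \<Longrightarrow> dB n i b \<in> B (n - 1)"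
    using simp_set_face_closed[OF B] n by blast
  note x' = x[unfolded loday_def tcp_set_def]
  show ?thesis
  proof (cases "i = 0")
    case True
    let ?dC = "tmap R A eta (F (n - 1)) (\<lambda>(f, a). (dF n 0 f, a))"
    let ?act = "\<lambda>b. tmap R A eta (F (n - 1)) (\<lambda>(f, a). (act (n - 1) (tau n b) f, a))"
    have dF0: "\<And>f. f \<in> F n \<Longrightarrow> dF n 0 f \<in> F (n - 1)" using dF True by simp
    have act_closed: "\<And>b f. b \<in> B n \<Longrightarrow> f \<in> F (n - 1) \<Longrightarrow> act (n - 1) (tau n b) f \<in> F (n - 1)"
      using simp_action_closed[OF act] twisting_function_closed[OF tau] n by blast
    have "regroup R A eta (F (n - 1)) (B (n - 1))
        (tmap R A eta (F (n - 1) \<times> B (n - 1)) (\<lambda>(p, a). (tcp_face act tau dF dB n 0 p, a)) x) =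
      tmap R (tensor R A eta (F (n - 1))) (tunit R A eta (F (n - 1))) (B (n - 1))
        (\<lambda>(b, c). (dB n 0 b, ?act b (?dC c))) (regroup R A eta (F n) (B n) x)"
    proof (rule regroup_natural[where e\<^sub>1 = "\<lambda>f b. act (n - 1) (tau n b) (dF n 0 f)"])
      show "\<And>b. b \<in> B n \<Longrightarrow> (\<lambda>c. ?act b (?dC c)) \<in> ring_hom (tensor R A eta (F n)) (tensor R A eta (F (n - 1)))"
        using ring_hom_trans[OF tensor_reindex_hom[OF dF0] tensor_reindex_hom[OF act_closed]]
        by (simp add: comp_def)
      show "?act b (?dC (tunit R A eta (F n) r)) = tunit R A eta (F (n - 1)) r"
        if "b \<in> B n" "r \<in> carrier R" for b r
        using that
        by (simp only: tensor_reindex_tunit[OF dF0] tensor_reindex_tunit[OF act_closed[OF that(1)]])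
      show "?act b (?dC (tgen R A eta (F n) f a)) = tgen R A eta (F (n - 1)) (act (n - 1) (tau n b) (dF n 0 f)) a"
        if "b \<in> B n" "f \<in> F n" "a \<in> carrier A" for b f a
        by (simp only: tensor_reindex_tgen[OF dF0 that(2,3)]
            tensor_reindex_tgen[OF act_closed[OF that(1)] dF0[OF that(2)] that(3)])
    qed (use dF0 dB act_closed x' True in \<open>auto simp: tcp_face_def\<close>)
    thus ?thesis using True
      by (simp add: loday_face_def twloday_face_def loday_act_def loday_def tcp_set_def)
  next
    case False
    let ?dC = "tmap R A eta (F (n - 1)) (\<lambda>(f, a). (dF n i f, a))"
    have "regroup R A eta (F (n - 1)) (B (n - 1))
        (tmap R A eta (F (n - 1) \<times> B (n - 1)) (\<lambda>(p, a). (tcp_face act tau dF dB n i p, a)) x) =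
      tmap R (tensor R A eta (F (n - 1))) (tunit R A eta (F (n - 1))) (B (n - 1))
        (\<lambda>(b, c). (dB n i b, ?dC c)) (regroup R A eta (F n) (B n) x)"
    proof (rule regroup_natural[where e\<^sub>1 = "\<lambda>f b. dF n i f" and h = "\<lambda>b. ?dC"])
      show "?dC \<in> ring_hom (tensor R A eta (F n)) (tensor R A eta (F (n - 1)))"
        by (rule tensor_reindex_hom[OF dF])
      show "\<And>r. r \<in> carrier R \<Longrightarrow> ?dC (tunit R A eta (F n) r) = tunit R A eta (F (n - 1)) r"
        by (rule tensor_reindex_tunit[OF dF])
      show "\<And>f a. f \<in> F n \<Longrightarrow> a \<in> carrier A \<Longrightarrow> ?dC (tgen R A eta (F n) f a) = tgen R A eta (F (n - 1)) (dF n i f) a"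
        by (rule tensor_reindex_tgen[OF dF])
    qed (use dF dB x' False in \<open>auto simp: tcp_face_def\<close>)
    thus ?thesis using False
      by (simp add: loday_face_def twloday_face_def loday_act_def loday_def tcp_set_def)
  qed
qed

lemma regroup_loday_degen:
  assumes F: "simp_set F dF sF" and B: "simp_set B dB sB"
    and i: "i \<le> n" and x: "x \<in> carrier (loday R A eta (tcp_set F B) n)"
  shows "regroup R A eta (F (Suc n)) (B (Suc n))
      (loday_degen R A eta (tcp_set F B) (tcp_degen sF sB) n i x) =
    twloday_degen R (loday R A eta F) (\<lambda>n. tunit R A eta (F n)) (loday_degen R A eta F sF)
      B sB n i (regroup R A eta (F n) (B n) x)"
proof -
  have sF: "\<And>f. f \<in> F n \<Longrightarrow> sF n i f \<in> F (Suc n)"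
    using simp_set_degen_closed[OF F] i by blast
  have sB: "\<And>b. b \<in> B n \<Longrightarrow> sB n i b \<in> B (Suc n)"
    using simp_set_degen_closed[OF B] i by blast
  let ?sC = "tmap R A eta (F (Suc n)) (\<lambda>(f, a). (sF n i f, a))"
  have "regroup R A eta (F (Suc n)) (B (Suc n))
      (tmap R A eta (F (Suc n) \<times> B (Suc n)) (\<lambda>(p, a). (tcp_degen sF sB n i p, a)) x) =
    tmap R (tensor R A eta (F (Suc n))) (tunit R A eta (F (Suc n))) (B (Suc n))
      (\<lambda>(b, c). (sB n i b, ?sC c)) (regroup R A eta (F n) (B n) x)"
  proof (rule regroup_natural[where e\<^sub>1 = "\<lambda>f b. sF n i f" and h = "\<lambda>b. ?sC"])
    show "\<And>f b. f \<in> F n \<Longrightarrow> b \<in> B n \<Longrightarrow> tcp_degen sF sB n i (f, b) = (sF n i f, sB n i b)"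
      by (simp add: tcp_degen_def)
    show "?sC \<in> ring_hom (tensor R A eta (F n)) (tensor R A eta (F (Suc n)))"
      by (rule tensor_reindex_hom[OF sF])
    show "\<And>r. r \<in> carrier R \<Longrightarrow> ?sC (tunit R A eta (F n) r) = tunit R A eta (F (Suc n)) r"
      by (rule tensor_reindex_tunit[OF sF])
    show "\<And>f a. f \<in> F n \<Longrightarrow> a \<in> carrier A \<Longrightarrow> ?sC (tgen R A eta (F n) f a) = tgen R A eta (F (Suc n)) (sF n i f) a"
      by (rule tensor_reindex_tgen[OF sF])
    show "x \<in> carrier (tensor R A eta (F n \<times> B n))"
      using x by (simp add: loday_def tcp_set_def)
  qed (use sF sB in blast)+
  thus ?thesis by (simp add: loday_degen_def twloday_degen_def loday_def tcp_set_def)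
qed

end

theorem proposition2p5:
  fixes R :: "'r ring" and A :: "'a ring" and eta :: "'r \<Rightarrow> 'a"
    and F :: "nat \<Rightarrow> 'f set" and dF sF :: "nat \<Rightarrow> nat \<Rightarrow> 'f \<Rightarrow> 'f"
    and B :: "nat \<Rightarrow> 'b set" and dB sB :: "nat \<Rightarrow> nat \<Rightarrow> 'b \<Rightarrow> 'b"
    and G :: "nat \<Rightarrow> 'g monoid" and dG sG :: "nat \<Rightarrow> nat \<Rightarrow> 'g \<Rightarrow> 'g"
    and act :: "nat \<Rightarrow> 'g \<Rightarrow> 'f \<Rightarrow> 'f" and tau :: "nat \<Rightarrow> 'b \<Rightarrow> 'g"
  assumes "finite_simp_set F dF sF"
    and "finite_simp_set B dB sB"
    and "simp_group G dG sG"
    and "simp_action G dG sG F dF sF act"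
    and "twisting_function G dG sG B dB sB tau"
    and "cring R" and "cring A" and "eta \<in> ring_hom R A"
  defines "E \<equiv> tcp_set F B"
    and "dE \<equiv> tcp_face act tau dF dB"
    and "sE \<equiv> tcp_degen sF sB"
    and "C \<equiv> loday R A eta F"
    and "etaC \<equiv> \<lambda>n. tunit R A eta (F n)"
    and "dC \<equiv> loday_face R A eta F dF"
    and "sC \<equiv> loday_degen R A eta F sF"
    and "actC \<equiv> loday_act R A eta F act"
  shows "\<exists>Phi. \<forall>n.
     Phi n \<in> ring_iso (loday R A eta E n) (twloday R C etaC B n) \<and>
     (\<forall>r\<in>carrier R. Phi n (tunit R A eta (E n) r) = tunit R (C n) (etaC n) (B n) r) \<and>
     (\<forall>i\<le>n. 0 < n \<longrightarrow> (\<forall>x\<in>carrier (loday R A eta E n).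
        Phi (n - 1) (loday_face R A eta E dE n i x) =
        twloday_face R C etaC dC actC B dB tau n i (Phi n x))) \<and>
     (\<forall>i\<le>n. \<forall>x\<in>carrier (loday R A eta E n).
        Phi (Suc n) (loday_degen R A eta E sE n i x) =
        twloday_degen R C etaC sC B sB n i (Phi n x)) \<and>
     (\<forall>f\<in>F n. \<forall>b\<in>B n. \<forall>a\<in>carrier A.
        Phi n (tgen R A eta (E n) (f, b) a) = tgen R (C n) (etaC n) (B n) b (tgen R A eta (F n) f a))"
proof -
  interpret comm_algebra R A eta
    using assms(6-8) by (intro comm_algebra.intro comm_algebra_axioms.intro)
  have F: "simp_set F dF sF" and B: "simp_set B dB sB"
    using assms(1,2) by (simp_all add: finite_simp_set_def)
  show ?thesis
  proof (intro exI[of _ "\<lambda>n. regroup R A eta (F n) (B n)"] allI conjI ballI impI)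
    fix n
    show "regroup R A eta (F n) (B n) \<in> ring_iso (loday R A eta E n) (twloday R C etaC B n)"
      unfolding E_def C_def etaC_def loday_def twloday_def tcp_set_def by (rule regroup_iso)
    show "regroup R A eta (F n) (B n) (tunit R A eta (E n) r) = tunit R (C n) (etaC n) (B n) r"
      if "r \<in> carrier R" for r
      unfolding E_def C_def etaC_def loday_def tcp_set_def using that by (rule regroup_tunit)
    show "regroup R A eta (F (n - 1)) (B (n - 1)) (loday_face R A eta E dE n i x) =
        twloday_face R C etaC dC actC B dB tau n i (regroup R A eta (F n) (B n) x)"
      if "i \<le> n" "0 < n" "x \<in> carrier (loday R A eta E n)" for i x
      unfolding E_def dE_def C_def etaC_def dC_def actC_def
      using regroup_loday_face[OF F B assms(4,5)] that by (simp add: E_def)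
    show "regroup R A eta (F (Suc n)) (B (Suc n)) (loday_degen R A eta E sE n i x) =
        twloday_degen R C etaC sC B sB n i (regroup R A eta (F n) (B n) x)"
      if "i \<le> n" "x \<in> carrier (loday R A eta E n)" for i x
      unfolding E_def sE_def C_def etaC_def sC_def
      using regroup_loday_degen[OF F B] that by (simp add: E_def)
    show "regroup R A eta (F n) (B n) (tgen R A eta (E n) (f, b) a) =
        tgen R (C n) (etaC n) (B n) b (tgen R A eta (F n) f a)"
      if "f \<in> F n" "b \<in> B n" "a \<in> carrier A" for f b a
      unfolding E_def C_def etaC_def loday_def tcp_set_def using that by (rule regroup_tgen)
  qed
qed

end
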